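(* Let $p\ge3$ be an integer, $\mathbf x_0\in\mathbb R^3$, and $\epsilon$ a real scalar function of class $\mathcal C^p$ in a neighborhood of $\mathbf x_0$ with $\epsilon(\mathbf x_0)\neq0$. Then $\dim\mathbb{QT}_p=2p^2+6p+3$.
   Context: Polynomials are in the variable $\mathbf X-\mathbf x_0$; $\mathbb P_p$ denotes the space of real polynomials of degree at most $p$ in three variables. For a $\mathcal C^q$ function $\varphi$, $T_q[\varphi]$ is its Taylor polynomial of degree $q$ at $\mathbf x_0$ (applied componentwise to vector fields). The quasi-Trefftz space for the Maxwell operator $\mathcal L_M=\nabla\times\nabla\times-\epsilon$ is $$\mathbb{QT}_p=\Big\{\mathbf\Pi\in(\mathbb P_p)^3:\ T_{p-2}\big[\nabla\times\nabla\times\mathbf\Pi-\epsilon\mathbf\Pi\big]=\mathbf 0,\ T_{p-1}\big[\nabla\cdot(\epsilon\mathbf\Pi)\big]=0\Big\}.$$ *)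

theory Defs
  imports "HOL-Analysis.Analysis" "HOL-Library.Function_Algebras"
begin

type_synonym mindex = "nat \<times> nat \<times> nat"

definition mdeg :: "mindex \<Rightarrow> nat" where
  "mdeg a = fst a + fst (snd a) + snd (snd a)"

definition mfact :: "mindex \<Rightarrow> real" where
  "mfact a = fact (fst a) * fact (fst (snd a)) * fact (snd (snd a))"

definition mono :: "mindex \<Rightarrow> real^3 \<Rightarrow> real" where
  "mono a y = (y$1) ^ fst a * (y$2) ^ fst (snd a) * (y$3) ^ snd (snd a)"

definition mindices :: "nat \<Rightarrow> mindex set" where
  "mindices q = {a. mdeg a \<le> q}"

definition evec :: "3 \<Rightarrow> real^3" where
  "evec i = axis i 1"

definition pd :: "3 \<Rightarrow> (real^3 \<Rightarrow> real) \<Rightarrow> real^3 \<Rightarrow> real" where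
  "pd i f x = deriv (\<lambda>t. f (x + t *\<^sub>R evec i)) 0"

definition has_pd :: "3 \<Rightarrow> (real^3 \<Rightarrow> real) \<Rightarrow> real^3 \<Rightarrow> bool" where
  "has_pd i f x = ((\<lambda>t. f (x + t *\<^sub>R evec i)) differentiable (at 0))"

fun Ck_on :: "nat \<Rightarrow> (real^3) set \<Rightarrow> (real^3 \<Rightarrow> real) \<Rightarrow> bool" where
  "Ck_on 0 U f = continuous_on U f"
| "Ck_on (Suc k) U f = (continuous_on U f \<and>
      (\<forall>i. \<forall>x\<in>U. has_pd i f x) \<and> (\<forall>i. Ck_on k U (pd i f)))"

definition mpd :: "mindex \<Rightarrow> (real^3 \<Rightarrow> real) \<Rightarrow> real^3 \<Rightarrow> real" where
  "mpd a f = ((pd 1 ^^ fst a) ((pd 2 ^^ fst (snd a)) ((pd 3 ^^ snd (snd a)) f)))"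

definition taylor :: "nat \<Rightarrow> real^3 \<Rightarrow> (real^3 \<Rightarrow> real) \<Rightarrow> real^3 \<Rightarrow> real" where
  "taylor q x0 f x = (\<Sum>a\<in>mindices q. mpd a f x0 / mfact a * mono a (x - x0))"

definition taylor_vec :: "nat \<Rightarrow> real^3 \<Rightarrow> (real^3 \<Rightarrow> real^3) \<Rightarrow> real^3 \<Rightarrow> real^3" where
  "taylor_vec q x0 F x = (\<chi> i. taylor q x0 (\<lambda>y. F y $ i) x)"

definition polyfield :: "nat \<Rightarrow> real^3 \<Rightarrow> (real^3 \<Rightarrow> real^3) \<Rightarrow> bool" where
  "polyfield p x0 F = (\<exists>c :: mindex \<Rightarrow> real^3.
      \<forall>x. F x = (\<Sum>a\<in>mindices p. mono a (x - x0) *\<^sub>R c a))"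

definition curl :: "(real^3 \<Rightarrow> real^3) \<Rightarrow> real^3 \<Rightarrow> real^3" where
  "curl F x = vector [
      pd 2 (\<lambda>y. F y $ 3) x - pd 3 (\<lambda>y. F y $ 2) x,
      pd 3 (\<lambda>y. F y $ 1) x - pd 1 (\<lambda>y. F y $ 3) x,
      pd 1 (\<lambda>y. F y $ 2) x - pd 2 (\<lambda>y. F y $ 1) x]"

definition divg :: "(real^3 \<Rightarrow> real^3) \<Rightarrow> real^3 \<Rightarrow> real" where
  "divg F x = (\<Sum>i\<in>UNIV. pd i (\<lambda>y. F y $ i) x)"

definition QT :: "nat \<Rightarrow> real^3 \<Rightarrow> (real^3 \<Rightarrow> real) \<Rightarrow> (real^3 \<Rightarrow> real^3) set" where
  "QT p x0 eps = {Pi. polyfield p x0 Pi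
      \<and> taylor_vec (p - 2) x0 (\<lambda>x. curl (curl Pi) x - eps x *\<^sub>R Pi x) = (\<lambda>x. 0)
      \<and> taylor (p - 1) x0 (divg (\<lambda>x. eps x *\<^sub>R Pi x)) = (\<lambda>x. 0)}"

definition fscale :: "real \<Rightarrow> (real^3 \<Rightarrow> real^3) \<Rightarrow> real^3 \<Rightarrow> real^3" where
  "fscale r F = (\<lambda>x. r *\<^sub>R F x)"

end

theory Submission
  imports Defs
begin

text \<open>Write a polynomial field as \<open>\<Sum>\<^sub>b C i b (X - x\<^sub>0)\<^sup>b\<close> in each component \<open>i\<close>. Both Taylor
  conditions become linear equations on the coefficients \<open>C\<close>, in which \<open>\<epsilon>\<close> enters through its
  Taylor coefficients \<open>e\<close>: curl-curl equations at \<open>|b| \<le> p - 2\<close> and divergence equations at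
  \<open>|b| \<le> p - 1\<close>. Because \<open>e 0 = \<epsilon> x\<^sub>0 \<noteq> 0\<close>, degree by degree each equation can be solved
  for one coefficient of top degree: the divergence equation at \<open>b\<close> for \<open>C 1 (b + e\<^sub>1)\<close>, the
  \<open>i\<close>-th curl-curl equation at \<open>b\<close> for \<open>C i (b + 2e\<^sub>1)\<close> when \<open>i \<noteq> 1\<close>, and the first one at
  \<open>(0, b\<^sub>2, b\<^sub>3)\<close> for \<open>C 1 (0, b\<^sub>2 + 2, b\<^sub>3)\<close>. Hence the field is determined by the
  free coefficients, \<open>C 1 a\<close> with \<open>a\<^sub>1 = 0, a\<^sub>2 \<le> 1\<close> and \<open>C i a\<close> with \<open>i \<noteq> 1, a\<^sub>1 \<le> 1\<close>, of
  which there are \<open>2p\<^sup>2 + 6p + 3\<close>. Conversely, since \<open>div curl = 0\<close>, the first curl-curl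
  equations at \<open>b\<close> with \<open>b\<^sub>1 \<ge> 1\<close> follow from the others, so the space is cut out of the
  polynomial fields by one equation per non-free coefficient, which gives the matching lower
  bound.\<close>


section \<open>Partial derivatives and functions of class \<open>C\<^sup>k\<close>\<close>

lemma evec_nth: "evec i $ k = (if k = i then 1 else 0)"
  by (simp add: evec_def axis_def)

lemma eventually_line_in_open:
  assumes "open U" "x \<in> U"
  shows "\<forall>\<^sub>F t in nhds 0. x + t *\<^sub>R evec i \<in> U"
proof -
  have "((\<lambda>t::real. x + t *\<^sub>R evec i) \<longlongrightarrow> x + 0 *\<^sub>R evec i) (nhds 0)"
    by (intro tendsto_intros filterlim_ident)
  then show ?thesis using assms topological_tendstoD by fastforce
qed

lemma pd_cong:
  assumes "open U" "x \<in> U" "\<And>y. y \<in> U \<Longrightarrow> f y = g y"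
  shows "pd i f x = pd i g x"
  unfolding pd_def
  by (rule deriv_cong_ev[OF eventually_mono[OF eventually_line_in_open[OF assms(1,2), of i]]])
     (auto simp: assms(3))

lemma has_pd_cong:
  assumes "open U" "x \<in> U" "\<And>y. y \<in> U \<Longrightarrow> f y = g y"
  shows "has_pd i f x \<longleftrightarrow> has_pd i g x"
proof -
  have "\<forall>\<^sub>F t in nhds 0. f (x + t *\<^sub>R evec i) = g (x + t *\<^sub>R evec i)"
    by (rule eventually_mono[OF eventually_line_in_open[OF assms(1,2), of i]]) (auto simp: assms(3))
  from DERIV_cong_ev[OF refl this refl] show ?thesis
    unfolding has_pd_def real_differentiable_def by auto
qed

lemma has_pd_has_real_derivative:
  "has_pd i f x \<Longrightarrow> ((\<lambda>t. f (x + t *\<^sub>R evec i)) has_real_derivative pd i f x) (at 0)"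
  unfolding has_pd_def pd_def using DERIV_deriv_iff_real_differentiable by blast

lemma has_real_derivative_imp_pd:
  "((\<lambda>t. f (x + t *\<^sub>R evec i)) has_real_derivative D) (at 0) \<Longrightarrow> has_pd i f x \<and> pd i f x = D"
  unfolding has_pd_def pd_def using DERIV_imp_deriv real_differentiable_def by blast

lemma has_pd_has_real_derivative_shift:
  assumes "has_pd i f (z + s *\<^sub>R evec i)"
  shows "((\<lambda>t. f (z + t *\<^sub>R evec i)) has_real_derivative pd i f (z + s *\<^sub>R evec i)) (at s)"
proof -
  let ?g = "\<lambda>h. f (z + s *\<^sub>R evec i + h *\<^sub>R evec i)"
  have "((\<lambda>t. ?g (t + - s)) has_real_derivative pd i f (z + s *\<^sub>R evec i)) (at s)"
    using DERIV_shift has_pd_has_real_derivative[OF assms] by fastforce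
  moreover have "(\<lambda>t. ?g (t + - s)) = (\<lambda>t. f (z + t *\<^sub>R evec i))"
    by (auto simp: algebra_simps)
  ultimately show ?thesis by simp
qed

lemma pd_const: "has_pd i (\<lambda>y. c) x \<and> pd i (\<lambda>y. c) x = 0"
  by (rule has_real_derivative_imp_pd) (auto intro!: derivative_eq_intros)

lemma pd_coord:
  "has_pd i (\<lambda>y. (y - z) $ k) x \<and> pd i (\<lambda>y. (y - z) $ k) x = (if k = i then 1 else 0)"
  by (rule has_real_derivative_imp_pd) (auto intro!: derivative_eq_intros simp: evec_nth)

lemma pd_add:
  "has_pd i f x \<Longrightarrow> has_pd i g x \<Longrightarrow>
   has_pd i (\<lambda>y. f y + g y) x \<and> pd i (\<lambda>y. f y + g y) x = pd i f x + pd i g x"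
  by (rule has_real_derivative_imp_pd, intro derivative_intros has_pd_has_real_derivative)

lemma pd_scale:
  "has_pd i f x \<Longrightarrow> has_pd i (\<lambda>y. c * f y) x \<and> pd i (\<lambda>y. c * f y) x = c * pd i f x"
  by (rule has_real_derivative_imp_pd) (auto intro!: derivative_eq_intros has_pd_has_real_derivative)

lemma pd_mult:
  "has_pd i f x \<Longrightarrow> has_pd i g x \<Longrightarrow>
   has_pd i (\<lambda>y. f y * g y) x \<and> pd i (\<lambda>y. f y * g y) x = pd i f x * g x + f x * pd i g x"
  by (rule has_real_derivative_imp_pd) (auto intro!: derivative_eq_intros has_pd_has_real_derivative)

lemma Ck_on_SucD: "Ck_on (Suc k) U f \<Longrightarrow> Ck_on k U f"
  by (induction k arbitrary: f) auto

lemma Ck_on_le: "Ck_on k U f \<Longrightarrow> m \<le> k \<Longrightarrow> Ck_on m U f"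
proof (induction k)
  case (Suc k)
  then show ?case using Ck_on_SucD le_Suc_eq by blast
qed simp

lemma Ck_on_funpow_pd: "Ck_on (n + k) U f \<Longrightarrow> Ck_on k U ((pd i ^^ n) f)"
  by (induction n arbitrary: f) (auto simp: funpow_Suc_right simp del: funpow.simps)

lemma Ck_on_const: "Ck_on k U (\<lambda>y. c)"
proof (induction k arbitrary: c)
  case (Suc k)
  have "pd i (\<lambda>y. c) = (\<lambda>y. 0)" for i using pd_const by auto
  then show ?case using Suc pd_const by simp
qed simp

lemma Ck_on_coord: "Ck_on k U (\<lambda>y. (y - z) $ j)"
proof (cases k)
  case (Suc m)
  have "pd i (\<lambda>y. (y - z) $ j) = (\<lambda>y. if j = i then 1 else 0)" for i
    using pd_coord by auto
  then show ?thesis using Suc pd_coord Ck_on_const[of m U] by (simp add: continuous_intros)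
qed (simp add: continuous_intros)

context
  fixes U :: "(real^3) set"
  assumes U: "open U"
begin

lemma Ck_on_cong: "(\<And>y. y \<in> U \<Longrightarrow> f y = g y) \<Longrightarrow> Ck_on k U f \<Longrightarrow> Ck_on k U g"
proof (induction k arbitrary: f g)
  case 0
  then show ?case using continuous_on_cong by fastforce
next
  case (Suc k)
  have "continuous_on U g"
    using Suc.prems continuous_on_cong[of U U f g] by simp
  moreover have "has_pd i g x" if "x \<in> U" for i x
    using has_pd_cong[OF U that, of f g i] Suc.prems that by simp
  moreover have "Ck_on k U (pd i g)" for i
  proof (rule Suc.IH)
    show "pd i f y = pd i g y" if "y \<in> U" for y
      using pd_cong[OF U that, of f g i] Suc.prems(1) by blast
  qed (use Suc.prems(2) in simp)
  ultimately show ?case by simp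
qed

lemma Ck_on_add: "Ck_on k U f \<Longrightarrow> Ck_on k U g \<Longrightarrow> Ck_on k U (\<lambda>y. f y + g y)"
proof (induction k arbitrary: f g)
  case (Suc k)
  have "Ck_on k U (\<lambda>y. pd i f y + pd i g y)" for i
    using Suc by simp
  then have "Ck_on k U (pd i (\<lambda>y. f y + g y))" for i
    by (rule Ck_on_cong[rotated]) (use pd_add Suc.prems in auto)
  then show ?case
    using Suc.prems pd_add by (simp add: continuous_on_add)
qed (simp add: continuous_on_add)

lemma Ck_on_mult: "Ck_on k U f \<Longrightarrow> Ck_on k U g \<Longrightarrow> Ck_on k U (\<lambda>y. f y * g y)"
proof (induction k arbitrary: f g)
  case (Suc k)
  have "Ck_on k U f" "Ck_on k U g"
    using Suc.prems Ck_on_SucD by blast+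
  then have "Ck_on k U (\<lambda>y. pd i f y * g y + f y * pd i g y)" for i
    using Suc by (simp add: Ck_on_add)
  then have "Ck_on k U (pd i (\<lambda>y. f y * g y))" for i
    by (rule Ck_on_cong[rotated]) (use pd_mult Suc.prems in auto)
  then show ?case
    using Suc.prems pd_mult by (simp add: continuous_on_mult)
qed (simp add: continuous_on_mult)

lemma Ck_on_diff: "Ck_on k U f \<Longrightarrow> Ck_on k U g \<Longrightarrow> Ck_on k U (\<lambda>y. f y - g y)"
  using Ck_on_add[OF _ Ck_on_mult[OF Ck_on_const, of k g "-1"], of f] by simp

lemma Ck_on_sum:
  "finite S \<Longrightarrow> (\<And>j. j \<in> S \<Longrightarrow> Ck_on k U (f j)) \<Longrightarrow> Ck_on k U (\<lambda>y. \<Sum>j\<in>S. f j y)"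
  by (induction S rule: finite_induct) (auto intro: Ck_on_const Ck_on_add)

lemma Ck_on_power: "Ck_on k U f \<Longrightarrow> Ck_on k U (\<lambda>y. f y ^ n)"
  by (induction n) (auto intro: Ck_on_const Ck_on_mult)

lemma Ck_on_monomial: "Ck_on k U (\<lambda>y. mono a (y - z))"
  unfolding mono_def by (intro Ck_on_mult Ck_on_power Ck_on_coord)

end


section \<open>Symmetry of second derivatives\<close>

lemma second_difference_mvt:
  assumes U: "open U" and f: "Ck_on 2 U f" and st: "0 < s" "0 < t"
    and box: "\<And>\<sigma> \<tau>. 0 \<le> \<sigma> \<Longrightarrow> \<sigma> \<le> s \<Longrightarrow> 0 \<le> \<tau> \<Longrightarrow> \<tau> \<le> t \<Longrightarrow>
      x + \<sigma> *\<^sub>R evec i + \<tau> *\<^sub>R evec j \<in> U"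
  shows "\<exists>\<sigma> \<tau>. 0 < \<sigma> \<and> \<sigma> < s \<and> 0 < \<tau> \<and> \<tau> < t \<and>
    f (x + s *\<^sub>R evec i + t *\<^sub>R evec j) - f (x + s *\<^sub>R evec i) - f (x + t *\<^sub>R evec j) + f x
      = s * t * pd j (pd i f) (x + \<sigma> *\<^sub>R evec i + \<tau> *\<^sub>R evec j)"
proof -
  have hp1: "has_pd k f y" and hp2: "has_pd k (pd l f) y" if "y \<in> U" for k l y
    using f that by (simp_all add: numeral_2_eq_2)
  define g where "g \<sigma> = f (x + t *\<^sub>R evec j + \<sigma> *\<^sub>R evec i) - f (x + \<sigma> *\<^sub>R evec i)" for \<sigma>
  have "DERIV g \<sigma> :> pd i f (x + t *\<^sub>R evec j + \<sigma> *\<^sub>R evec i) - pd i f (x + \<sigma> *\<^sub>R evec i)"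
    if "0 \<le> \<sigma>" "\<sigma> \<le> s" for \<sigma>
    unfolding g_def
    using box[OF that, of 0] box[OF that, of t] st
    by (intro DERIV_diff has_pd_has_real_derivative_shift hp1) (auto simp: algebra_simps)
  from MVT2[OF st(1) this] obtain \<sigma> where \<sigma>: "0 < \<sigma>" "\<sigma> < s"
    "g s - g 0 = s * (pd i f (x + t *\<^sub>R evec j + \<sigma> *\<^sub>R evec i) - pd i f (x + \<sigma> *\<^sub>R evec i))"
    by auto
  define h where "h \<tau> = pd i f (x + \<sigma> *\<^sub>R evec i + \<tau> *\<^sub>R evec j)" for \<tau>
  have "DERIV h \<tau> :> pd j (pd i f) (x + \<sigma> *\<^sub>R evec i + \<tau> *\<^sub>R evec j)"
    if "0 \<le> \<tau>" "\<tau> \<le> t" for \<tau>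
    unfolding h_def using that \<sigma> by (intro has_pd_has_real_derivative_shift hp2 box) auto
  from MVT2[OF st(2) this] obtain \<tau> where \<tau>: "0 < \<tau>" "\<tau> < t"
    "h t - h 0 = t * pd j (pd i f) (x + \<sigma> *\<^sub>R evec i + \<tau> *\<^sub>R evec j)"
    by auto
  have "f (x + s *\<^sub>R evec i + t *\<^sub>R evec j) - f (x + s *\<^sub>R evec i) - f (x + t *\<^sub>R evec j) + f x
      = g s - g 0"
    unfolding g_def by (simp add: algebra_simps)
  also have "\<dots> = s * (h t - h 0)"
    using \<sigma>(3) unfolding h_def by (simp add: algebra_simps)
  also have "\<dots> = s * t * pd j (pd i f) (x + \<sigma> *\<^sub>R evec i + \<tau> *\<^sub>R evec j)"
    using \<tau>(3) by simp
  finally show ?thesis using \<sigma> \<tau> by blast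
qed

lemma dist_two_steps_le:
  assumes "0 \<le> \<sigma>" "\<sigma> \<le> s" "0 \<le> \<tau>" "\<tau> \<le> s"
  shows "dist (x + \<sigma> *\<^sub>R evec k + \<tau> *\<^sub>R evec l) x \<le> 2 * s"
proof -
  have "norm (\<sigma> *\<^sub>R evec k + \<tau> *\<^sub>R evec l) \<le> norm (\<sigma> *\<^sub>R evec k) + norm (\<tau> *\<^sub>R evec l)"
    by (rule norm_triangle_ineq)
  also have "\<dots> \<le> 2 * s"
    using assms by (simp add: evec_def)
  finally show ?thesis by (simp add: dist_norm add.assoc)
qed

lemma mixed_pds_meet_near:
  assumes U: "open U" and f: "Ck_on 2 U f" and s: "0 < s" and sub: "cball x (2 * s) \<subseteq> U"
  shows "\<exists>y z. dist y x \<le> 2 * s \<and> dist z x \<le> 2 * s \<and> pd j (pd i f) y = pd i (pd j f) z"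
proof -
  have inU: "x + \<sigma> *\<^sub>R evec k + \<tau> *\<^sub>R evec l \<in> U"
    if "0 \<le> \<sigma>" "\<sigma> \<le> s" "0 \<le> \<tau>" "\<tau> \<le> s" for \<sigma> \<tau> k l
  proof -
    have "x + \<sigma> *\<^sub>R evec k + \<tau> *\<^sub>R evec l \<in> cball x (2 * s)"
      using dist_two_steps_le[OF that] by (simp add: dist_commute)
    then show ?thesis using sub by blast
  qed
  obtain \<sigma> \<tau> where st: "0 < \<sigma>" "\<sigma> < s" "0 < \<tau>" "\<tau> < s"
    "f (x + s *\<^sub>R evec i + s *\<^sub>R evec j) - f (x + s *\<^sub>R evec i) - f (x + s *\<^sub>R evec j) + f x
      = s * s * pd j (pd i f) (x + \<sigma> *\<^sub>R evec i + \<tau> *\<^sub>R evec j)"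
    using second_difference_mvt[OF U f s s inU] by blast
  obtain \<sigma>' \<tau>' where st': "0 < \<sigma>'" "\<sigma>' < s" "0 < \<tau>'" "\<tau>' < s"
    "f (x + s *\<^sub>R evec j + s *\<^sub>R evec i) - f (x + s *\<^sub>R evec j) - f (x + s *\<^sub>R evec i) + f x
      = s * s * pd i (pd j f) (x + \<sigma>' *\<^sub>R evec j + \<tau>' *\<^sub>R evec i)"
    using second_difference_mvt[OF U f s s inU] by blast
  have "s * s * pd j (pd i f) (x + \<sigma> *\<^sub>R evec i + \<tau> *\<^sub>R evec j)
      = s * s * pd i (pd j f) (x + \<sigma>' *\<^sub>R evec j + \<tau>' *\<^sub>R evec i)"
    using st(5) st'(5) by (simp add: algebra_simps)
  then show ?thesis
    using s dist_two_steps_le[of \<sigma> s \<tau> x i j] dist_two_steps_le[of \<sigma>' s \<tau>' x j i] st st'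
    by (intro exI[of _ "x + \<sigma> *\<^sub>R evec i + \<tau> *\<^sub>R evec j"]
        exI[of _ "x + \<sigma>' *\<^sub>R evec j + \<tau>' *\<^sub>R evec i"]) auto
qed

lemma pd_commute:
  assumes U: "open U" and f: "Ck_on 2 U f" and x: "x \<in> U"
  shows "pd i (pd j f) x = pd j (pd i f) x"
proof -
  define A where "A = pd i (pd j f) x"
  define B where "B = pd j (pd i f) x"
  have cA: "continuous_on U (pd i (pd j f))" and cB: "continuous_on U (pd j (pd i f))"
    using f by (simp_all add: numeral_2_eq_2)
  obtain r where r: "r > 0" "cball x r \<subseteq> U" using U x open_contains_cball by blast
  have "\<bar>A - B\<bar> < 2 * e" if e: "e > 0" for e
  proof -
    obtain d1 where d1: "d1 > 0" "\<And>y. y \<in> U \<Longrightarrow> dist y x < d1 \<Longrightarrow> dist (pd i (pd j f) y) A < e"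
      using cA x e unfolding continuous_on_iff A_def by metis
    obtain d2 where d2: "d2 > 0" "\<And>y. y \<in> U \<Longrightarrow> dist y x < d2 \<Longrightarrow> dist (pd j (pd i f) y) B < e"
      using cB x e unfolding continuous_on_iff B_def by metis
    define s where "s = min r (min d1 d2) / 4"
    have s: "s > 0" "2 * s < r" "2 * s < d1" "2 * s < d2"
      using r d1 d2 by (auto simp: s_def)
    then have sub: "cball x (2 * s) \<subseteq> U"
      using subset_cball[of "2 * s" r x] r(2) by simp
    obtain y z where yz: "dist y x \<le> 2 * s" "dist z x \<le> 2 * s" "pd j (pd i f) y = pd i (pd j f) z"
      using mixed_pds_meet_near[OF U f s(1) sub] by blast
    have "y \<in> U" "z \<in> U"
      using yz(1,2) sub by (auto simp: dist_commute)
    then have "dist (pd i (pd j f) z) A < e" "dist (pd j (pd i f) y) B < e"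
      using d1(2) d2(2) yz(1,2) s by auto
    then show ?thesis using yz(3) by (simp add: dist_real_def)
  qed
  from this[of "\<bar>A - B\<bar> / 2"] show ?thesis
    unfolding A_def B_def by (cases "A = B") (auto simp: A_def B_def)
qed


section \<open>Taylor coefficients\<close>

context
  fixes U :: "(real^3) set"
  assumes U: "open U"
begin

lemma funpow_pd_cong:
  "(\<And>y. y \<in> U \<Longrightarrow> f y = g y) \<Longrightarrow> y \<in> U \<Longrightarrow> (pd i ^^ n) f y = (pd i ^^ n) g y"
proof (induction n arbitrary: y)
  case (Suc n)
  then show ?case using pd_cong[OF U Suc.prems(2), of "(pd i ^^ n) f" "(pd i ^^ n) g" i] by simp
qed simp

lemma funpow_pd_lincomb:
  "Ck_on n U f \<Longrightarrow> Ck_on n U g \<Longrightarrow> y \<in> U \<Longrightarrow>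
   (pd i ^^ n) (\<lambda>y. f y + c * g y) y = (pd i ^^ n) f y + c * (pd i ^^ n) g y"
proof (induction n arbitrary: y)
  case (Suc n)
  have "(pd i ^^ n) (\<lambda>y. f y + c * g y) z = (pd i ^^ n) f z + c * (pd i ^^ n) g z"
    if "z \<in> U" for z
    using Suc.IH[OF Ck_on_SucD Ck_on_SucD that] Suc.prems by blast
  from pd_cong[OF U Suc.prems(3) this]
  have "(pd i ^^ Suc n) (\<lambda>y. f y + c * g y) y
      = pd i (\<lambda>z. (pd i ^^ n) f z + c * (pd i ^^ n) g z) y"
    by simp
  moreover have "has_pd i ((pd i ^^ n) f) y" "has_pd i ((pd i ^^ n) g) y"
    using Ck_on_funpow_pd[of n "Suc 0" U _ i] Suc.prems by simp_all
  ultimately show ?case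
    using pd_add[OF _ pd_scale[THEN conjunct1]] pd_scale[THEN conjunct2] by simp
qed simp

lemma funpow_pd_commute:
  "Ck_on (Suc n) U h \<Longrightarrow> y \<in> U \<Longrightarrow> (pd j ^^ n) (pd i h) y = pd i ((pd j ^^ n) h) y"
proof (induction n arbitrary: y)
  case (Suc n)
  have "Ck_on 2 U ((pd j ^^ n) h)"
    using Ck_on_funpow_pd[of n 2 U h j] Suc.prems by simp
  moreover have "(pd j ^^ Suc n) (pd i h) y = pd j (pd i ((pd j ^^ n) h)) y"
    using pd_cong[OF U Suc.prems(2), of "(pd j ^^ n) (pd i h)" "pd i ((pd j ^^ n) h)" j]
      Suc.IH[OF Ck_on_SucD[OF Suc.prems(1)]] by simp
  ultimately show ?case
    using pd_commute[OF U _ Suc.prems(2)] by simp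
qed simp

lemma Ck_on_mpd_stages:
  assumes "Ck_on (mdeg (a1, a2, a3)) U f"
  shows "Ck_on a3 U f" "Ck_on a2 U ((pd 3 ^^ a3) f)"
    "Ck_on a1 U ((pd 2 ^^ a2) ((pd 3 ^^ a3) f))"
  using assms Ck_on_funpow_pd[of a3 "a2 + a1" U f 3] Ck_on_funpow_pd[of a2 a1 U _ 2]
  by (auto simp: mdeg_def ac_simps elim: Ck_on_le dest: Ck_on_funpow_pd)

lemma mpd_cong: "(\<And>y. y \<in> U \<Longrightarrow> f y = g y) \<Longrightarrow> y \<in> U \<Longrightarrow> mpd a f y = mpd a g y"
  unfolding mpd_def by (intro funpow_pd_cong) auto

lemma mpd_lincomb:
  assumes "Ck_on (mdeg a) U f" "Ck_on (mdeg a) U g" "y \<in> U"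
  shows "mpd a (\<lambda>y. f y + c * g y) y = mpd a f y + c * mpd a g y"
proof -
  obtain a1 a2 a3 where a: "a = (a1, a2, a3)" by (cases a)
  note f = Ck_on_mpd_stages[OF assms(1)[unfolded a]]
  note g = Ck_on_mpd_stages[OF assms(2)[unfolded a]]
  have "mpd a (\<lambda>y. f y + c * g y) y
      = (pd 1 ^^ a1) ((pd 2 ^^ a2) (\<lambda>y. (pd 3 ^^ a3) f y + c * (pd 3 ^^ a3) g y)) y"
    unfolding mpd_def a prod.sel
    by (intro funpow_pd_cong assms(3)) (auto intro: funpow_pd_lincomb f g)
  also have "\<dots> = (pd 1 ^^ a1)
      (\<lambda>y. (pd 2 ^^ a2) ((pd 3 ^^ a3) f) y + c * (pd 2 ^^ a2) ((pd 3 ^^ a3) g) y) y"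
    by (intro funpow_pd_cong assms(3)) (auto intro: funpow_pd_lincomb f g)
  also have "\<dots> = mpd a f y + c * mpd a g y"
    unfolding mpd_def a prod.sel by (auto intro: funpow_pd_lincomb f g assms(3))
  finally show ?thesis .
qed

end

definition taylor_coeff :: "real^3 \<Rightarrow> mindex \<Rightarrow> (real^3 \<Rightarrow> real) \<Rightarrow> real" where
  "taylor_coeff x0 b f = mpd b f x0 / mfact b"

definition munit :: "3 \<Rightarrow> mindex" where
  "munit i = (if i = 1 then (1, 0, 0) else if i = 2 then (0, 1, 0) else (0, 0, 1))"

definition mcomp :: "mindex \<Rightarrow> 3 \<Rightarrow> nat" where
  "mcomp b i = (if i = 1 then fst b else if i = 2 then fst (snd b) else snd (snd b))"

lemma mindex_zero_eq [simp]: "(0 :: mindex) = (0, 0, 0)"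
  by (simp add: zero_prod_def)

lemma mfact_pos: "0 < mfact b"
  by (simp add: mfact_def)

lemma mfact_add_munit: "mfact (b + munit i) = real (mcomp b i + 1) * mfact b"
  by (cases b) (auto simp: mfact_def munit_def mcomp_def)

lemma mdeg_add_munit [simp]: "mdeg (b + munit i) = Suc (mdeg b)"
  by (cases b) (auto simp: mdeg_def munit_def)

lemma mdeg_eq_0_iff: "mdeg b = 0 \<longleftrightarrow> b = 0"
  by (cases b) (auto simp: mdeg_def)

lemma mcomp_add_munit: "mcomp (b + munit j) l = mcomp b l + (if l = j then 1 else 0)"
  using exhaust_3[of j] exhaust_3[of l] by (cases b) (auto simp: mcomp_def munit_def)

lemma mcomp_pos_imp_add_munit: "0 < mcomp b j \<Longrightarrow> \<exists>b'. b = b' + munit j"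
proof -
  assume "0 < mcomp b j"
  then obtain k where "mcomp b j = Suc k" using gr0_implies_Suc by blast
  then show ?thesis
    using exhaust_3[of j] by (cases b) (auto simp: mcomp_def munit_def split: if_splits)
qed

lemma mindex_nonzero_imp_add_munit: "b \<noteq> 0 \<Longrightarrow> \<exists>j b'. b = b' + munit j"
proof -
  assume "b \<noteq> 0"
  then have "0 < mcomp b 1 \<or> 0 < mcomp b 2 \<or> 0 < mcomp b 3"
    by (cases b) (auto simp: mcomp_def)
  then show ?thesis using mcomp_pos_imp_add_munit by blast
qed

lemma mono_add_munit: "mono (a + munit i) y = mono a y * y $ i"
  using exhaust_3[of i] by (cases a) (auto simp: mono_def munit_def)

lemma mpd_const: "mpd a (\<lambda>y. c) x = (if a = 0 then c else 0)"
proof -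
  have "(pd i ^^ n) (\<lambda>y. c) = (\<lambda>y. if n = 0 then c else 0)" for i n c
    using pd_const by (induction n) auto
  then show ?thesis by (cases a) (simp add: mpd_def)
qed

lemma taylor_coeff_const: "taylor_coeff x0 a (\<lambda>y. c) = (if a = 0 then c else 0)"
  by (simp add: taylor_coeff_def mpd_const mfact_def)

lemma taylor_coeff_0: "taylor_coeff x0 (0, 0, 0) f = f x0"
  by (simp add: taylor_coeff_def mpd_def mfact_def)

lemma mindex_induct [case_names 0 add_munit]:
  assumes "P 0" and "\<And>b j. P b \<Longrightarrow> P (b + munit j)"
  shows "P b"
proof (induction "mdeg b" arbitrary: b)
  case 0
  then show ?case using assms(1) mdeg_eq_0_iff by metis
next
  case (Suc n)
  then obtain j b' where "b = b' + munit j"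
    using mindex_nonzero_imp_add_munit mdeg_eq_0_iff by (metis nat.distinct(1))
  with Suc show ?case using assms(2) by simp
qed

lemma add_munit_le_add_munit_iff: "a + munit i \<le> b + munit i \<longleftrightarrow> a \<le> b"
  using exhaust_3[of i] by (cases a; cases b) (auto simp: munit_def)

lemma not_add_munit_le: "mcomp b i = 0 \<Longrightarrow> \<not> a + munit i \<le> b"
  using exhaust_3[of i] by (cases a; cases b) (auto simp: munit_def mcomp_def)

lemma mindex_le_diff_eq_0_iff: "a \<le> b \<and> b - a = 0 \<longleftrightarrow> a = b" for a b :: mindex
  by (cases a; cases b) auto

lemma finite_mindices: "finite (mindices q)"
  by (rule finite_subset[of _ "{0..q} \<times> {0..q} \<times> {0..q}"]) (auto simp: mindices_def mdeg_def)

context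
  fixes U :: "(real^3) set" and x0 :: "real^3"
  assumes U: "open U" and x0: "x0 \<in> U"
begin

lemma mpd_pd:
  assumes h: "Ck_on (Suc (mdeg b)) U h"
  shows "mpd b (pd i h) x0 = mpd (b + munit i) h x0"
proof -
  obtain b1 b2 b3 where b: "b = (b1, b2, b3)" by (cases b)
  have h3: "Ck_on (Suc b3) U h"
    by (rule Ck_on_le[OF h]) (simp add: b mdeg_def)
  have h2: "Ck_on (Suc b2) U ((pd 3 ^^ b3) h)"
    by (rule Ck_on_funpow_pd, rule Ck_on_le[OF h]) (simp add: b mdeg_def)
  have pd2: "(pd 2 ^^ b2) (pd i ((pd 3 ^^ b3) h)) y = pd i ((pd 2 ^^ b2) ((pd 3 ^^ b3) h)) y"
    if "y \<in> U" for y
    by (rule funpow_pd_commute[OF U h2 that])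
  consider "i = 1" | "i = 2" | "i = 3" using exhaust_3 by blast
  then show ?thesis
  proof cases
    case 1
    have "mpd b (pd i h) x0 = (pd 1 ^^ b1) ((pd 2 ^^ b2) (pd 1 ((pd 3 ^^ b3) h))) x0"
      unfolding mpd_def b prod.sel 1
      by (intro funpow_pd_cong[OF U] x0) (auto intro: funpow_pd_commute[OF U h3])
    also have "\<dots> = (pd 1 ^^ b1) (pd 1 ((pd 2 ^^ b2) ((pd 3 ^^ b3) h))) x0"
      by (intro funpow_pd_cong[OF U] x0) (auto intro: pd2[unfolded 1])
    finally show ?thesis
      unfolding mpd_def b 1 by (simp add: munit_def funpow_Suc_right del: funpow.simps)
  next
    case 2
    have "mpd b (pd i h) x0 = (pd 1 ^^ b1) ((pd 2 ^^ b2) (pd 2 ((pd 3 ^^ b3) h))) x0"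
      unfolding mpd_def b prod.sel 2
      by (intro funpow_pd_cong[OF U] x0) (auto intro: funpow_pd_commute[OF U h3])
    then show ?thesis
      unfolding mpd_def b 2 by (simp add: munit_def funpow_Suc_right del: funpow.simps)
  next
    case 3
    then show ?thesis
      unfolding mpd_def b by (simp add: munit_def funpow_Suc_right del: funpow.simps)
  qed
qed

lemma taylor_coeff_pd:
  assumes "Ck_on (Suc (mdeg b)) U h"
  shows "taylor_coeff x0 b (pd i h) = real (mcomp b i + 1) * taylor_coeff x0 (b + munit i) h"
  using mpd_pd[OF assms, of i] mfact_pos[of b]
  unfolding taylor_coeff_def mfact_add_munit by (simp del: of_nat_Suc)

lemma taylor_coeff_cong:
  assumes "\<And>y. y \<in> U \<Longrightarrow> f y = g y"
  shows "taylor_coeff x0 a f = taylor_coeff x0 a g"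
  unfolding taylor_coeff_def using mpd_cong[OF U assms x0] by simp

lemma taylor_coeff_lincomb:
  "Ck_on (mdeg a) U f \<Longrightarrow> Ck_on (mdeg a) U g \<Longrightarrow>
   taylor_coeff x0 a (\<lambda>y. f y + c * g y) = taylor_coeff x0 a f + c * taylor_coeff x0 a g"
  unfolding taylor_coeff_def by (simp add: mpd_lincomb[OF U _ _ x0] add_divide_distrib)

lemma taylor_coeff_add:
  "Ck_on (mdeg a) U f \<Longrightarrow> Ck_on (mdeg a) U g \<Longrightarrow>
   taylor_coeff x0 a (\<lambda>y. f y + g y) = taylor_coeff x0 a f + taylor_coeff x0 a g"
  using taylor_coeff_lincomb[of a f g 1] by simp

lemma taylor_coeff_diff:
  "Ck_on (mdeg a) U f \<Longrightarrow> Ck_on (mdeg a) U g \<Longrightarrow>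
   taylor_coeff x0 a (\<lambda>y. f y - g y) = taylor_coeff x0 a f - taylor_coeff x0 a g"
  using taylor_coeff_lincomb[of a f g "-1"] by simp

lemma taylor_coeff_scale:
  "Ck_on (mdeg a) U f \<Longrightarrow> taylor_coeff x0 a (\<lambda>y. c * f y) = c * taylor_coeff x0 a f"
  using taylor_coeff_lincomb[of a "\<lambda>y. 0" f c] Ck_on_const[of "mdeg a" U 0]
  by (simp add: taylor_coeff_const)

lemma taylor_coeff_sum:
  "finite S \<Longrightarrow> (\<And>j. j \<in> S \<Longrightarrow> Ck_on (mdeg a) U (f j)) \<Longrightarrow>
   taylor_coeff x0 a (\<lambda>y. \<Sum>j\<in>S. f j y) = (\<Sum>j\<in>S. taylor_coeff x0 a (f j))"
proof (induction S rule: finite_induct)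
  case empty
  then show ?case using taylor_coeff_const[of x0 a 0] by simp
next
  case (insert j S)
  then have "Ck_on (mdeg a) U (\<lambda>y. \<Sum>j\<in>S. f j y)"
    by (intro Ck_on_sum[OF U]) auto
  with insert show ?case
    using taylor_coeff_add[where f = "f j" and g = "\<lambda>y. \<Sum>j\<in>S. f j y"] by simp
qed

lemma pd_mult_coord:
  assumes "Ck_on (Suc k) U f" "y \<in> U"
  shows "pd j (\<lambda>y. f y * (y - x0) $ i) y = pd j f y * (y - x0) $ i + (if i = j then f y else 0)"
  using pd_mult[of j f y "\<lambda>y. (y - x0) $ i"] pd_coord[of j x0 i y] assms by auto

lemma taylor_coeff_mult_coord_eq_0:
  "Ck_on k U f \<Longrightarrow> mdeg b \<le> k \<Longrightarrow> mcomp b i = 0 \<Longrightarrow>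
   taylor_coeff x0 b (\<lambda>y. f y * (y - x0) $ i) = 0"
proof (induction b arbitrary: f k rule: mindex_induct)
  case 0
  then show ?case by (simp add: taylor_coeff_0)
next
  case (add_munit b j)
  obtain k' where k: "k = Suc k'" using add_munit.prems(2) by (cases k) auto
  have ji: "j \<noteq> i" and bi: "mcomp b i = 0"
    using add_munit.prems(3) by (auto simp: mcomp_add_munit split: if_splits)
  have "real (mcomp b j + 1) * taylor_coeff x0 (b + munit j) (\<lambda>y. f y * (y - x0) $ i)
      = taylor_coeff x0 b (pd j (\<lambda>y. f y * (y - x0) $ i))"
    using add_munit.prems(1,2)
    by (intro taylor_coeff_pd[symmetric] Ck_on_le[OF Ck_on_mult[OF U _ Ck_on_coord]]) auto
  also have "\<dots> = taylor_coeff x0 b (\<lambda>y. pd j f y * (y - x0) $ i)"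
    using pd_mult_coord add_munit.prems(1) ji unfolding k by (intro taylor_coeff_cong) auto
  also have "\<dots> = 0"
    using add_munit.IH[of k' "pd j f"] add_munit.prems bi k by simp
  finally show ?case by simp
qed

lemma taylor_coeff_mult_coord:
  "Ck_on k U f \<Longrightarrow> mdeg b < k \<Longrightarrow>
   taylor_coeff x0 (b + munit i) (\<lambda>y. f y * (y - x0) $ i) = taylor_coeff x0 b f"
proof (induction b arbitrary: f k rule: measure_induct_rule[of mdeg])
  case (less b)
  obtain k' where k: "k = Suc k'" using less.prems(2) by (cases k) auto
  have pf: "Ck_on k' U (pd i f)" using less.prems(1) k by simp
  have fb: "Ck_on (mdeg b) U f" using less.prems Ck_on_le by simp
  have pd_term: "taylor_coeff x0 b (\<lambda>y. pd i f y * (y - x0) $ i)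
      = real (mcomp b i) * taylor_coeff x0 b f"
  proof (cases "mcomp b i = 0")
    case True
    then show ?thesis
      using taylor_coeff_mult_coord_eq_0[OF pf] less.prems(2) k by simp
  next
    case False
    then obtain b' where b': "b = b' + munit i"
      using mcomp_pos_imp_add_munit by blast
    then have "taylor_coeff x0 b (\<lambda>y. pd i f y * (y - x0) $ i) = taylor_coeff x0 b' (pd i f)"
      using less.IH[of b' k' "pd i f"] pf less.prems(2) k by simp
    also have "\<dots> = real (mcomp b i) * taylor_coeff x0 b f"
      using taylor_coeff_pd[of b' f i] fb b' by (simp add: mcomp_add_munit)
    finally show ?thesis .
  qed
  have "real (mcomp b i + 1) * taylor_coeff x0 (b + munit i) (\<lambda>y. f y * (y - x0) $ i)
      = taylor_coeff x0 b (pd i (\<lambda>y. f y * (y - x0) $ i))"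
    using less.prems
    by (intro taylor_coeff_pd[symmetric] Ck_on_le[OF Ck_on_mult[OF U _ Ck_on_coord]]) auto
  also have "\<dots> = taylor_coeff x0 b (\<lambda>y. pd i f y * (y - x0) $ i + f y)"
    using pd_mult_coord less.prems(1) unfolding k by (intro taylor_coeff_cong) auto
  also have "\<dots> = real (mcomp b i + 1) * taylor_coeff x0 b f"
    using taylor_coeff_add[OF Ck_on_le[OF Ck_on_mult[OF U pf Ck_on_coord]] fb] pd_term
      less.prems(2) k
    by (simp add: algebra_simps)
  finally show ?case by (simp del: of_nat_Suc)
qed

lemma taylor_coeff_mult_monomial:
  "Ck_on k U f \<Longrightarrow> mdeg b \<le> k \<Longrightarrow>
   taylor_coeff x0 b (\<lambda>y. f y * mono a (y - x0))
     = (if a \<le> b then taylor_coeff x0 (b - a) f else 0)"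
proof (induction a arbitrary: b rule: mindex_induct)
  case 0
  then show ?case by (cases b) (simp add: mono_def)
next
  case (add_munit a i)
  have eq: "(\<lambda>y. f y * mono (a + munit i) (y - x0))
      = (\<lambda>y. (f y * mono a (y - x0)) * (y - x0) $ i)"
    by (simp add: mono_add_munit mult.assoc)
  have g: "Ck_on k U (\<lambda>y. f y * mono a (y - x0))"
    by (intro Ck_on_mult[OF U add_munit.prems(1) Ck_on_monomial[OF U]])
  show ?case
  proof (cases "mcomp b i = 0")
    case True
    then show ?thesis
      unfolding eq using taylor_coeff_mult_coord_eq_0[OF g add_munit.prems(2)] not_add_munit_le
      by simp
  next
    case False
    then obtain b' where b': "b = b' + munit i"
      using mcomp_pos_imp_add_munit by blast
    then have "taylor_coeff x0 b (\<lambda>y. (f y * mono a (y - x0)) * (y - x0) $ i)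
        = taylor_coeff x0 b' (\<lambda>y. f y * mono a (y - x0))"
      using taylor_coeff_mult_coord[OF g] add_munit.prems(2) by simp
    then show ?thesis
      unfolding eq using add_munit.IH[OF add_munit.prems(1), of b'] add_munit.prems(2) b'
      by (simp add: add_munit_le_add_munit_iff)
  qed
qed

end

lemma taylor_coeff_poly:
  "taylor_coeff x0 b (\<lambda>y. \<Sum>a\<in>mindices q. d a * mono a (y - x0))
     = (if b \<in> mindices q then d b else 0)"
proof -
  have mono_coeff: "taylor_coeff x0 b (\<lambda>y. mono a (y - x0)) = (if a = b then 1 else 0)" for a
    using taylor_coeff_mult_monomial[of UNIV x0 "mdeg b" "\<lambda>y. 1" b a] Ck_on_const[of "mdeg b" UNIV 1]
      mindex_le_diff_eq_0_iff[of a b]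
    by (auto simp: taylor_coeff_const)
  have "taylor_coeff x0 b (\<lambda>y. \<Sum>a\<in>mindices q. d a * mono a (y - x0))
      = (\<Sum>a\<in>mindices q. taylor_coeff x0 b (\<lambda>y. d a * mono a (y - x0)))"
    by (intro taylor_coeff_sum[of UNIV] finite_mindices Ck_on_mult Ck_on_const Ck_on_monomial) auto
  also have "\<dots> = (\<Sum>a\<in>mindices q. d a * (if a = b then 1 else 0))"
    using taylor_coeff_scale[OF open_UNIV UNIV_I Ck_on_monomial[OF open_UNIV]] mono_coeff by simp
  also have "\<dots> = (if b \<in> mindices q then d b else 0)"
    by (simp add: finite_mindices if_distrib sum.delta' cong: if_cong)
  finally show ?thesis .
qed

lemma taylor_eq: "taylor q x0 f = (\<lambda>x. \<Sum>a\<in>mindices q. taylor_coeff x0 a f * mono a (x - x0))"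
  by (simp add: taylor_def taylor_coeff_def fun_eq_iff)

lemma taylor_eq_0_iff:
  "taylor q x0 f = (\<lambda>x. 0) \<longleftrightarrow> (\<forall>b\<in>mindices q. taylor_coeff x0 b f = 0)"
proof
  assume taylor_0: "taylor q x0 f = (\<lambda>x. 0)"
  show "\<forall>b\<in>mindices q. taylor_coeff x0 b f = 0"
  proof
    fix b assume "b \<in> mindices q"
    moreover have "taylor_coeff x0 b (taylor q x0 f) = 0"
      using taylor_0 by (simp add: taylor_coeff_const)
    ultimately show "taylor_coeff x0 b f = 0"
      unfolding taylor_eq taylor_coeff_poly by simp
  qed
qed (simp add: taylor_eq)

lemma taylor_vec_eq_0_iff:
  "taylor_vec q x0 F = (\<lambda>x. 0) \<longleftrightarrow> (\<forall>i. \<forall>b\<in>mindices q. taylor_coeff x0 b (\<lambda>y. F y $ i) = 0)"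
proof -
  have "taylor_vec q x0 F = (\<lambda>x. 0) \<longleftrightarrow> (\<forall>i. taylor q x0 (\<lambda>y. F y $ i) = (\<lambda>x. 0))"
    by (auto simp: taylor_vec_def fun_eq_iff vec_eq_iff)
  then show ?thesis using taylor_eq_0_iff by simp
qed


section \<open>The defining equations in terms of Taylor coefficients\<close>

definition poly_field :: "nat \<Rightarrow> real^3 \<Rightarrow> (mindex \<Rightarrow> real^3) \<Rightarrow> real^3 \<Rightarrow> real^3" where
  "poly_field p x0 c = (\<lambda>x. \<Sum>a\<in>mindices p. mono a (x - x0) *\<^sub>R c a)"

definition field_coeff :: "real^3 \<Rightarrow> (real^3 \<Rightarrow> real^3) \<Rightarrow> 3 \<Rightarrow> mindex \<Rightarrow> real" where
  "field_coeff x0 F l b = taylor_coeff x0 b (\<lambda>y. F y $ l)"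

definition smooth_field :: "(real^3) set \<Rightarrow> (real^3 \<Rightarrow> real^3) \<Rightarrow> bool" where
  "smooth_field U F \<longleftrightarrow> (\<forall>l k. Ck_on k U (\<lambda>y. F y $ l))"

text \<open>A coefficient array \<open>C l b\<close> stands for the vector field with components
  \<open>\<Sum>\<^sub>b C l b (X - x\<^sub>0)\<^sup>b\<close>; the following operations are differentiation, the curl, and
  multiplication by the Taylor series \<open>e\<close> of \<open>\<epsilon>\<close>, read off on coefficients.\<close>

definition dcoeff :: "3 \<Rightarrow> (mindex \<Rightarrow> real) \<Rightarrow> mindex \<Rightarrow> real" where
  "dcoeff i X b = real (mcomp b i + 1) * X (b + munit i)"

definition curl_coeff :: "(3 \<Rightarrow> mindex \<Rightarrow> real) \<Rightarrow> 3 \<Rightarrow> mindex \<Rightarrow> real" where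
  "curl_coeff C j =
     (if j = 1 then (\<lambda>b. dcoeff 2 (C 3) b - dcoeff 3 (C 2) b)
      else if j = 2 then (\<lambda>b. dcoeff 3 (C 1) b - dcoeff 1 (C 3) b)
      else (\<lambda>b. dcoeff 1 (C 2) b - dcoeff 2 (C 1) b))"

definition mult_coeff ::
    "nat \<Rightarrow> (mindex \<Rightarrow> real) \<Rightarrow> (3 \<Rightarrow> mindex \<Rightarrow> real) \<Rightarrow> 3 \<Rightarrow> mindex \<Rightarrow> real" where
  "mult_coeff p e C i b = (\<Sum>a\<in>mindices p. (if a \<le> b then e (b - a) else 0) * C i a)"

definition curlcurl_residual ::
    "nat \<Rightarrow> (mindex \<Rightarrow> real) \<Rightarrow> (3 \<Rightarrow> mindex \<Rightarrow> real) \<Rightarrow> 3 \<Rightarrow> mindex \<Rightarrow> real" where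
  "curlcurl_residual p e C i b = curl_coeff (curl_coeff C) i b - mult_coeff p e C i b"

definition div_residual ::
    "nat \<Rightarrow> (mindex \<Rightarrow> real) \<Rightarrow> (3 \<Rightarrow> mindex \<Rightarrow> real) \<Rightarrow> mindex \<Rightarrow> real" where
  "div_residual p e C b = (\<Sum>i\<in>UNIV. dcoeff i (mult_coeff p e C i) b)"

lemma poly_field_nth: "poly_field p x0 c x $ l = (\<Sum>a\<in>mindices p. c a $ l * mono a (x - x0))"
  by (simp add: poly_field_def sum_component mult.commute)

lemma smooth_field_poly_field: "open U \<Longrightarrow> smooth_field U (poly_field p x0 c)"
  unfolding smooth_field_def poly_field_nth
  by (auto intro!: Ck_on_sum finite_mindices Ck_on_mult Ck_on_const Ck_on_monomial)

lemma field_coeff_poly_field: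
  "field_coeff x0 (poly_field p x0 c) l b = (if b \<in> mindices p then c b $ l else 0)"
  unfolding field_coeff_def poly_field_nth by (rule taylor_coeff_poly)

lemma curl_nth:
  "curl F x $ 1 = pd 2 (\<lambda>y. F y $ 3) x - pd 3 (\<lambda>y. F y $ 2) x"
  "curl F x $ 2 = pd 3 (\<lambda>y. F y $ 1) x - pd 1 (\<lambda>y. F y $ 3) x"
  "curl F x $ 3 = pd 1 (\<lambda>y. F y $ 2) x - pd 2 (\<lambda>y. F y $ 1) x"
  by (simp_all add: curl_def)

context
  fixes U :: "(real^3) set" and x0 :: "real^3"
  assumes U: "open U" and x0: "x0 \<in> U"
begin

lemma smooth_field_curl: "smooth_field U F \<Longrightarrow> smooth_field U (curl F)"
  unfolding smooth_field_def
proof (intro allI)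
  fix l :: 3 and k :: nat
  assume "\<forall>l k. Ck_on k U (\<lambda>y. F y $ l)"
  then have d: "Ck_on k U (pd i (\<lambda>y. F y $ j))" for i j
    using Ck_on.simps(2) by blast
  consider "l = 1" | "l = 2" | "l = 3" using exhaust_3 by blast
  then show "Ck_on k U (\<lambda>y. curl F y $ l)"
    by cases (simp_all only: curl_nth; rule Ck_on_diff[OF U d d])+
qed

lemma field_coeff_curl:
  assumes F: "smooth_field U F"
  shows "field_coeff x0 (curl F) j b = curl_coeff (field_coeff x0 F) j b"
proof -
  have d: "Ck_on k U (pd i (\<lambda>y. F y $ l))" for i l k
    using F Ck_on.simps(2) unfolding smooth_field_def by blast
  have cp: "taylor_coeff x0 b (pd i (\<lambda>y. F y $ l)) = dcoeff i (\<lambda>b. taylor_coeff x0 b (\<lambda>y. F y $ l)) b"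
    for i l
    using F unfolding dcoeff_def smooth_field_def by (intro taylor_coeff_pd[OF U x0]) blast
  consider "j = 1" | "j = 2" | "j = 3" using exhaust_3 by blast
  then show ?thesis
    unfolding field_coeff_def
    by cases (simp_all add: curl_nth taylor_coeff_diff[OF U x0 d d] cp curl_coeff_def)
qed

end

context
  fixes U :: "(real^3) set" and x0 :: "real^3" and p :: nat and eps :: "real^3 \<Rightarrow> real"
  assumes U: "open U" and x0: "x0 \<in> U" and eps: "Ck_on p U eps"
begin

lemma Ck_on_eps_mult_poly_field: "Ck_on p U (\<lambda>y. eps y * poly_field p x0 c y $ i)"
  using smooth_field_poly_field[OF U] unfolding smooth_field_def
  by (intro Ck_on_mult[OF U eps]) blast

lemma taylor_coeff_eps_mult_poly_field:
  assumes b: "mdeg b \<le> p"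
  shows "taylor_coeff x0 b (\<lambda>y. eps y * poly_field p x0 c y $ i)
    = mult_coeff p (\<lambda>d. taylor_coeff x0 d eps) (field_coeff x0 (poly_field p x0 c)) i b"
proof -
  have e: "Ck_on (mdeg b) U eps" by (rule Ck_on_le[OF eps b])
  have m: "Ck_on (mdeg b) U (\<lambda>y. eps y * mono a (y - x0))" for a
    by (intro Ck_on_mult[OF U e Ck_on_monomial[OF U]])
  have "taylor_coeff x0 b (\<lambda>y. eps y * poly_field p x0 c y $ i)
      = taylor_coeff x0 b (\<lambda>y. \<Sum>a\<in>mindices p. c a $ i * (eps y * mono a (y - x0)))"
    by (simp add: poly_field_nth sum_distrib_left mult_ac)
  also have "\<dots> = (\<Sum>a\<in>mindices p. taylor_coeff x0 b (\<lambda>y. c a $ i * (eps y * mono a (y - x0))))"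
    by (intro taylor_coeff_sum[OF U x0] finite_mindices Ck_on_mult[OF U Ck_on_const m])
  also have "\<dots> = (\<Sum>a\<in>mindices p.
      c a $ i * (if a \<le> b then taylor_coeff x0 (b - a) eps else 0))"
    by (intro sum.cong refl)
       (simp add: taylor_coeff_scale[OF U x0 m] taylor_coeff_mult_monomial[OF U x0 e order_refl])
  also have "\<dots> = mult_coeff p (\<lambda>d. taylor_coeff x0 d eps) (field_coeff x0 (poly_field p x0 c)) i b"
    unfolding mult_coeff_def field_coeff_poly_field by (intro sum.cong refl) auto
  finally show ?thesis .
qed

lemma taylor_coeff_curlcurl_residual:
  assumes b: "mdeg b \<le> p"
  shows "taylor_coeff x0 b
      (\<lambda>x. (curl (curl (poly_field p x0 c)) x - eps x *\<^sub>R poly_field p x0 c x) $ i)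
    = curlcurl_residual p (\<lambda>d. taylor_coeff x0 d eps) (field_coeff x0 (poly_field p x0 c)) i b"
proof -
  have s1: "smooth_field U (curl (poly_field p x0 c))"
    by (rule smooth_field_curl[OF U x0 smooth_field_poly_field[OF U]])
  have s2: "smooth_field U (curl (curl (poly_field p x0 c)))"
    by (rule smooth_field_curl[OF U x0 s1])
  have "taylor_coeff x0 b
      (\<lambda>x. (curl (curl (poly_field p x0 c)) x - eps x *\<^sub>R poly_field p x0 c x) $ i)
      = field_coeff x0 (curl (curl (poly_field p x0 c))) i b
        - taylor_coeff x0 b (\<lambda>y. eps y * poly_field p x0 c y $ i)"
    unfolding field_coeff_def using s2 Ck_on_le[OF Ck_on_eps_mult_poly_field b]
    by (simp add: smooth_field_def taylor_coeff_diff[OF U x0])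
  also have "\<dots>
      = curlcurl_residual p (\<lambda>d. taylor_coeff x0 d eps) (field_coeff x0 (poly_field p x0 c)) i b"
    using field_coeff_curl[OF U x0 smooth_field_poly_field[OF U]]
    unfolding curlcurl_residual_def field_coeff_curl[OF U x0 s1]
      taylor_coeff_eps_mult_poly_field[OF b]
    by presburger
  finally show ?thesis .
qed

lemma taylor_coeff_div_residual:
  assumes b: "Suc (mdeg b) \<le> p"
  shows "taylor_coeff x0 b (divg (\<lambda>x. eps x *\<^sub>R poly_field p x0 c x))
    = div_residual p (\<lambda>d. taylor_coeff x0 d eps) (field_coeff x0 (poly_field p x0 c)) b"
proof -
  have K: "Ck_on (Suc (mdeg b)) U (\<lambda>y. eps y * poly_field p x0 c y $ i)" for i
    by (rule Ck_on_le[OF Ck_on_eps_mult_poly_field b])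
  have "divg (\<lambda>x. eps x *\<^sub>R poly_field p x0 c x)
      = (\<lambda>x. \<Sum>i\<in>UNIV. pd i (\<lambda>y. eps y * poly_field p x0 c y $ i) x)"
    by (simp add: divg_def fun_eq_iff)
  then have "taylor_coeff x0 b (divg (\<lambda>x. eps x *\<^sub>R poly_field p x0 c x))
      = (\<Sum>i\<in>UNIV. taylor_coeff x0 b (pd i (\<lambda>y. eps y * poly_field p x0 c y $ i)))"
    using K by (simp add: taylor_coeff_sum[OF U x0])
  also have "\<dots> = div_residual p (\<lambda>d. taylor_coeff x0 d eps) (field_coeff x0 (poly_field p x0 c)) b"
    unfolding div_residual_def dcoeff_def
    using b by (intro sum.cong refl)
      (simp add: taylor_coeff_pd[OF U x0 K] taylor_coeff_eps_mult_poly_field)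
  finally show ?thesis .
qed

lemma poly_field_in_QT_iff:
  assumes "p \<ge> 2"
  shows "poly_field p x0 c \<in> QT p x0 eps \<longleftrightarrow>
    (\<forall>i. \<forall>b\<in>mindices (p - 2).
       curlcurl_residual p (\<lambda>d. taylor_coeff x0 d eps) (field_coeff x0 (poly_field p x0 c)) i b = 0) \<and>
    (\<forall>b\<in>mindices (p - 1).
       div_residual p (\<lambda>d. taylor_coeff x0 d eps) (field_coeff x0 (poly_field p x0 c)) b = 0)"
proof -
  have "polyfield p x0 (poly_field p x0 c)"
    unfolding polyfield_def poly_field_def by blast
  moreover have "taylor_vec (p - 2) x0
      (\<lambda>x. curl (curl (poly_field p x0 c)) x - eps x *\<^sub>R poly_field p x0 c x) = (\<lambda>x. 0) \<longleftrightarrow>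
    (\<forall>i. \<forall>b\<in>mindices (p - 2).
       curlcurl_residual p (\<lambda>d. taylor_coeff x0 d eps) (field_coeff x0 (poly_field p x0 c)) i b = 0)"
    unfolding taylor_vec_eq_0_iff using taylor_coeff_curlcurl_residual assms
    by (auto simp: mindices_def)
  moreover have "taylor (p - 1) x0 (divg (\<lambda>x. eps x *\<^sub>R poly_field p x0 c x)) = (\<lambda>x. 0) \<longleftrightarrow>
    (\<forall>b\<in>mindices (p - 1).
       div_residual p (\<lambda>d. taylor_coeff x0 d eps) (field_coeff x0 (poly_field p x0 c)) b = 0)"
    unfolding taylor_eq_0_iff using taylor_coeff_div_residual assms
    by (auto simp: mindices_def)
  ultimately show ?thesis
    unfolding QT_def by simp
qed

end


section \<open>Solving the coefficient equations\<close>

lemma curl_coeff_curl_coeff_1: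
  "curl_coeff (curl_coeff C) 1 (b1, b2, b3) =
     real (b2 + 1) * real (b1 + 1) * C 2 (b1 + 1, b2 + 1, b3)
   - real (b2 + 1) * real (b2 + 2) * C 1 (b1, b2 + 2, b3)
   - real (b3 + 1) * real (b3 + 2) * C 1 (b1, b2, b3 + 2)
   + real (b3 + 1) * real (b1 + 1) * C 3 (b1 + 1, b2, b3 + 1)"
  by (simp add: curl_coeff_def dcoeff_def mcomp_def munit_def algebra_simps)

lemma curl_coeff_curl_coeff_2:
  "curl_coeff (curl_coeff C) 2 (b1, b2, b3) =
     real (b3 + 1) * real (b2 + 1) * C 3 (b1, b2 + 1, b3 + 1)
   - real (b3 + 1) * real (b3 + 2) * C 2 (b1, b2, b3 + 2)
   - real (b1 + 1) * real (b1 + 2) * C 2 (b1 + 2, b2, b3)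
   + real (b1 + 1) * real (b2 + 1) * C 1 (b1 + 1, b2 + 1, b3)"
  by (simp add: curl_coeff_def dcoeff_def mcomp_def munit_def algebra_simps)

lemma curl_coeff_curl_coeff_3:
  "curl_coeff (curl_coeff C) 3 (b1, b2, b3) =
     real (b1 + 1) * real (b3 + 1) * C 1 (b1 + 1, b2, b3 + 1)
   - real (b1 + 1) * real (b1 + 2) * C 3 (b1 + 2, b2, b3)
   - real (b2 + 1) * real (b2 + 2) * C 3 (b1, b2 + 2, b3)
   + real (b2 + 1) * real (b3 + 1) * C 2 (b1, b2 + 1, b3 + 1)"
  by (simp add: curl_coeff_def dcoeff_def mcomp_def munit_def algebra_simps)

lemma sum_dcoeff_expand:
  "(\<Sum>i\<in>UNIV. dcoeff i (X i) (b1, b2, b3)) = real (b1 + 1) * X 1 (b1 + 1, b2, b3)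
     + real (b2 + 1) * X 2 (b1, b2 + 1, b3) + real (b3 + 1) * X 3 (b1, b2, b3 + 1)"
  by (simp add: sum_3 dcoeff_def mcomp_def munit_def)

lemma dcoeff_commute: "dcoeff i (dcoeff j X) b = dcoeff j (dcoeff i X) b"
  by (simp add: dcoeff_def mcomp_add_munit add_ac)

lemma dcoeff_diff: "dcoeff i (\<lambda>b. X b - Y b) b = dcoeff i X b - dcoeff i Y b"
  by (simp add: dcoeff_def algebra_simps)

lemma div_curl_coeff: "(\<Sum>i\<in>UNIV. dcoeff i (curl_coeff D i) b) = 0"
proof -
  have "(\<Sum>i\<in>UNIV. dcoeff i (curl_coeff D i) b) =
      (dcoeff 1 (dcoeff 2 (D 3)) b - dcoeff 2 (dcoeff 1 (D 3)) b)
    + (dcoeff 2 (dcoeff 3 (D 1)) b - dcoeff 3 (dcoeff 2 (D 1)) b)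
    + (dcoeff 3 (dcoeff 1 (D 2)) b - dcoeff 1 (dcoeff 3 (D 2)) b)"
    by (simp add: sum_3 curl_coeff_def dcoeff_diff)
  then show ?thesis
    by (simp add: dcoeff_commute[of 1 2] dcoeff_commute[of 2 3] dcoeff_commute[of 3 1])
qed

lemma div_curlcurl_residual:
  "(\<Sum>i\<in>UNIV. dcoeff i (curlcurl_residual p e C i) b) = - div_residual p e C b"
  using div_curl_coeff[of "curl_coeff C" b]
  by (simp add: curlcurl_residual_def div_residual_def dcoeff_def
      right_diff_distrib sum_subtractf)

lemma mindex_less_imp_mdeg_less: "a \<le> b \<Longrightarrow> a \<noteq> b \<Longrightarrow> mdeg a < mdeg b" for a b :: mindex
  by (cases a; cases b) (auto simp: mdeg_def)

lemma mult_coeff_eq_leading: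
  assumes "\<And>i a. a \<notin> mindices p \<Longrightarrow> C i a = 0"
    and "\<And>i a. mdeg a < mdeg b \<Longrightarrow> C i a = 0"
  shows "mult_coeff p e C i b = e (0, 0, 0) * C i b"
proof -
  have "mult_coeff p e C i b = (\<Sum>a\<in>mindices p. (if a = b then e (0, 0, 0) * C i b else 0))"
    unfolding mult_coeff_def
    by (intro sum.cong refl) (auto dest: mindex_less_imp_mdeg_less simp: assms(2))
  also have "\<dots> = e (0, 0, 0) * C i b"
    using assms(1)[of b i] by (simp add: finite_mindices)
  finally show ?thesis .
qed

definition free_coeffs :: "nat \<Rightarrow> (3 \<times> mindex) set" where
  "free_coeffs p = {(i, a). a \<in> mindices p \<and>
     (i = 1 \<and> fst a = 0 \<and> fst (snd a) \<le> 1 \<or> i \<noteq> 1 \<and> fst a \<le> 1)}"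

context
  fixes p :: nat and e :: "mindex \<Rightarrow> real" and C :: "3 \<Rightarrow> mindex \<Rightarrow> real"
  assumes supp: "\<And>i a. a \<notin> mindices p \<Longrightarrow> C i a = 0"
    and e0: "e (0, 0, 0) \<noteq> 0"
    and curlcurl: "\<And>i b. mdeg b + 2 \<le> p \<Longrightarrow> curlcurl_residual p e C i b = 0"
    and div: "\<And>b. mdeg b + 1 \<le> p \<Longrightarrow> div_residual p e C b = 0"
    and free: "\<And>i a. (i, a) \<in> free_coeffs p \<Longrightarrow> C i a = 0"
begin

text \<open>In the next three lemmas the coefficients of degree below \<open>d\<close> are known to vanish, so
  \<open>mult_coeff\<close> reduces to \<open>e 0 * C\<close>, and each residual expresses one coefficient of degree
  \<open>d\<close> through coefficients that are free or have been treated before.\<close>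

lemma coeff_1_vanish_x1_0:
  assumes low: "\<And>i a. mdeg a < d \<Longrightarrow> C i a = 0" and "d \<le> p" "m + a3 = d"
  shows "C 1 (0, m, a3) = 0"
  using assms(3)
proof (induction m arbitrary: a3 rule: less_induct)
  case (less m)
  show ?case
  proof (cases "m \<le> 1")
    case True
    then show ?thesis using free[of 1 "(0, m, a3)"] less.prems \<open>d \<le> p\<close>
      by (simp add: free_coeffs_def mindices_def mdeg_def)
  next
    case False
    define m' where "m' = m - 2"
    then have m: "m = m' + 2" using False by simp
    have "curlcurl_residual p e C 1 (0, m', a3) = 0"
      using curlcurl[of "(0, m', a3)" 1] less.prems \<open>d \<le> p\<close> m by (simp add: mdeg_def)
    moreover have "mult_coeff p e C 1 (0, m', a3) = 0"
      using mult_coeff_eq_leading[OF supp, where b = "(0, m', a3)"] low less.prems m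
      by (simp add: mdeg_def)
    moreover have "C 2 (1, m' + 1, a3) = 0" "C 3 (1, m', a3 + 1) = 0"
      using free[of 2 "(1, m' + 1, a3)"] free[of 3 "(1, m', a3 + 1)"] less.prems \<open>d \<le> p\<close> m
      by (simp_all add: free_coeffs_def mindices_def mdeg_def)
    moreover have "C 1 (0, m', a3 + 2) = 0"
      using less.IH[of m' "a3 + 2"] less.prems m by simp
    ultimately have "real (m' + 1) * real (m' + 2) * C 1 (0, m' + 2, a3) = 0"
      unfolding curlcurl_residual_def curl_coeff_curl_coeff_1 by (simp add: add.commute)
    then show ?thesis using m by simp
  qed
qed

lemma coeff_1_vanish_step:
  assumes low: "\<And>i a. mdeg a < d \<Longrightarrow> C i a = 0" and "d \<le> p"
    and prev: "\<And>j k' b c. k' < k \<Longrightarrow> k' + b + c = d \<Longrightarrow> C j (k', b, c) = 0"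
    and deg: "k + a2 + a3 = d"
  shows "C 1 (k, a2, a3) = 0"
proof (cases k)
  case 0
  then show ?thesis using coeff_1_vanish_x1_0[OF low \<open>d \<le> p\<close>, of a2 a3] deg by simp
next
  case (Suc k')
  have leading: "mult_coeff p e C i b = e (0, 0, 0) * C i b" if "mdeg b = d" for i b
    using mult_coeff_eq_leading[OF supp] low that by simp
  have "div_residual p e C (k', a2, a3) = 0"
    using div[of "(k', a2, a3)"] deg Suc \<open>d \<le> p\<close> by (simp add: mdeg_def)
  moreover have "C 2 (k', a2 + 1, a3) = 0" "C 3 (k', a2, a3 + 1) = 0"
    using prev[of k' "a2 + 1" a3 2] prev[of k' a2 "a3 + 1" 3] Suc deg by simp_all
  ultimately have "real (k' + 1) * (e (0, 0, 0) * C 1 (k, a2, a3)) = 0"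
    unfolding div_residual_def sum_dcoeff_expand
    using leading[of "(k' + 1, a2, a3)"] leading[of "(k', a2 + 1, a3)"] leading[of "(k', a2, a3 + 1)"]
      deg Suc by (simp add: mdeg_def)
  then show ?thesis using e0 by simp
qed

lemma coeff_23_vanish_step:
  assumes low: "\<And>i a. mdeg a < d \<Longrightarrow> C i a = 0" and "d \<le> p"
    and prev: "\<And>j k' b c. k' < k \<Longrightarrow> k' + b + c = d \<Longrightarrow> C j (k', b, c) = 0"
    and deg: "k + a2 + a3 = d" and j: "j \<noteq> 1"
  shows "C j (k, a2, a3) = 0"
proof (cases "k \<le> 1")
  case True
  then show ?thesis using free[of j "(k, a2, a3)"] j deg \<open>d \<le> p\<close>
    by (simp add: free_coeffs_def mindices_def mdeg_def)
next
  case False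
  define k' where "k' = k - 2"
  then have k: "k = k' + 2" using False by simp
  have "curlcurl_residual p e C j (k', a2, a3) = 0"
    using curlcurl[of "(k', a2, a3)" j] deg \<open>d \<le> p\<close> k by (simp add: mdeg_def)
  moreover have "mult_coeff p e C j (k', a2, a3) = 0"
    using mult_coeff_eq_leading[OF supp, where b = "(k', a2, a3)"] low deg k by (simp add: mdeg_def)
  moreover have "C i (k', b, c) = 0" if "k' + b + c = d" for i b c
    using prev[of k' b c i] that k by simp
  moreover have "C i (k' + 1, b, c) = 0" if "k' + 1 + b + c = d" for i b c
    using prev[of "k' + 1" b c i] that k by simp
  moreover have "j = 2 \<or> j = 3" using j exhaust_3 by blast
  ultimately have "real (k' + 1) * real (k' + 2) * C j (k' + 2, a2, a3) = 0"
    using deg k unfolding curlcurl_residual_def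
    by (elim disjE) (simp_all add: curl_coeff_curl_coeff_2 curl_coeff_curl_coeff_3)
  then show ?thesis using k by simp
qed

lemma coeffs_vanish: "C i a = 0"
proof -
  have "\<forall>i a. mdeg a = d \<longrightarrow> C i a = 0" for d
  proof (induction d rule: less_induct)
    case (less d)
    have low: "C i a = 0" if "mdeg a < d" for i a
      using less.IH that by blast
    show ?case
    proof (cases "d \<le> p")
      case False
      then show ?thesis using supp by (auto simp: mindices_def)
    next
      case True
      have "C i (k, a2, a3) = 0" if "k + a2 + a3 = d" for k i a2 a3
        using that
      proof (induction k arbitrary: i a2 a3 rule: less_induct)
        case (less k)
        then show ?case
          using coeff_1_vanish_step[OF low True] coeff_23_vanish_step[OF low True] by metis
      qed
      then show ?thesis by (auto simp: mdeg_def)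
    qed
  qed
  then show ?thesis by blast
qed

end

definition pivot_coeffs :: "nat \<Rightarrow> (3 \<times> mindex) set" where
  "pivot_coeffs p = (UNIV \<times> mindices p) - free_coeffs p"

text \<open>The residual whose leading unknown, in the elimination above, is the coefficient \<open>j\<close>.\<close>

definition pivot_residual ::
    "nat \<Rightarrow> (mindex \<Rightarrow> real) \<Rightarrow> (3 \<Rightarrow> mindex \<Rightarrow> real) \<Rightarrow> 3 \<times> mindex \<Rightarrow> real" where
  "pivot_residual p e C j = (case j of (i, a1, a2, a3) \<Rightarrow>
     if i = 1 then
       (if 1 \<le> a1 then div_residual p e C (a1 - 1, a2, a3)
        else curlcurl_residual p e C 1 (a1, a2 - 2, a3))
     else curlcurl_residual p e C i (a1 - 2, a2, a3))"

lemma curlcurl_residual_1_eq_0: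
  assumes "div_residual p e C (b1, b2, b3) = 0"
    and "curlcurl_residual p e C 2 (b1, b2 + 1, b3) = 0"
    and "curlcurl_residual p e C 3 (b1, b2, b3 + 1) = 0"
  shows "curlcurl_residual p e C 1 (b1 + 1, b2, b3) = 0"
  using div_curlcurl_residual[of p e C "(b1, b2, b3)"] assms
  unfolding sum_dcoeff_expand by simp

lemma pivot_residuals_eq_0:
  assumes curlcurl: "\<forall>i. \<forall>b\<in>mindices (p - 2). curlcurl_residual p e C i b = 0"
    and div: "\<forall>b\<in>mindices (p - 1). div_residual p e C b = 0"
    and "j \<in> pivot_coeffs p"
  shows "pivot_residual p e C j = 0"
proof -
  obtain i a1 a2 a3 where j: "j = (i, a1, a2, a3)" by (cases j)
  then have deg: "a1 + a2 + a3 \<le> p"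
    and pivot: "\<not> (i = 1 \<and> a1 = 0 \<and> a2 \<le> 1 \<or> i \<noteq> 1 \<and> a1 \<le> 1)"
    using assms(3) by (auto simp: pivot_coeffs_def free_coeffs_def mindices_def mdeg_def)
  consider "i = 1" "1 \<le> a1" | "i = 1" "a1 = 0" | "i \<noteq> 1" by linarith
  then show ?thesis
    by cases (use curlcurl div deg pivot in \<open>auto simp: pivot_residual_def j mindices_def mdeg_def\<close>)
qed

lemma residuals_eq_0_if_pivot_residuals_eq_0:
  assumes p: "p \<ge> 2" and piv: "\<forall>j\<in>pivot_coeffs p. pivot_residual p e C j = 0"
  shows "(\<forall>i. \<forall>b\<in>mindices (p - 2). curlcurl_residual p e C i b = 0) \<and>
    (\<forall>b\<in>mindices (p - 1). div_residual p e C b = 0)"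
proof -
  have div: "div_residual p e C (b1, b2, b3) = 0" if "b1 + b2 + b3 \<le> p - 1" for b1 b2 b3
    using piv[rule_format, of "(1, b1 + 1, b2, b3)"] that p
    by (simp add: pivot_residual_def pivot_coeffs_def free_coeffs_def mindices_def mdeg_def)
  have cc23: "curlcurl_residual p e C i (b1, b2, b3) = 0"
    if "b1 + b2 + b3 \<le> p - 2" "i \<noteq> 1" for i b1 b2 b3
    using piv[rule_format, of "(i, b1 + 2, b2, b3)"] that p
    by (simp add: pivot_residual_def pivot_coeffs_def free_coeffs_def mindices_def mdeg_def)
  have cc1: "curlcurl_residual p e C 1 (b1, b2, b3) = 0" if "b1 + b2 + b3 \<le> p - 2" for b1 b2 b3
  proof (cases b1)
    case 0
    then show ?thesis
      using piv[rule_format, of "(1, 0, b2 + 2, b3)"] that p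
      by (simp add: pivot_residual_def pivot_coeffs_def free_coeffs_def mindices_def mdeg_def)
  next
    case (Suc b1')
    then show ?thesis
      using curlcurl_residual_1_eq_0[OF div cc23 cc23] that by simp
  qed
  show ?thesis
    using div cc1 cc23 by (auto simp: mindices_def mdeg_def) (metis eq_numeral_extra(1))
qed

lemma pivot_residual_add:
  "pivot_residual p e (\<lambda>i a. C i a + D i a) j = pivot_residual p e C j + pivot_residual p e D j"
  by (simp add: pivot_residual_def curlcurl_residual_def div_residual_def curl_coeff_def
      dcoeff_def mult_coeff_def sum.distrib algebra_simps split: prod.split)

lemma pivot_residual_scale:
  "pivot_residual p e (\<lambda>i a. r * C i a) j = r * pivot_residual p e C j"
  by (simp add: pivot_residual_def curlcurl_residual_def div_residual_def curl_coeff_def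
      dcoeff_def mult_coeff_def sum_distrib_left algebra_simps split: prod.split)


section \<open>Counting the free coefficients\<close>

lemma card_triangle: "2 * card {(b, c). b + c \<le> n} = (n + 1) * (n + 2)"
proof (induction n)
  case 0
  have "{(b, c). b + c \<le> 0} = {(0 :: nat, 0 :: nat)}" by auto
  then show ?case by simp
next
  case (Suc n)
  have diag: "{(b, c). b + c = Suc n} = (\<lambda>b. (b, Suc n - b)) ` {0..Suc n}"
    by (auto simp: image_iff)
  have "card {(b, c). b + c \<le> Suc n} = card ({(b, c). b + c \<le> n} \<union> {(b, c). b + c = Suc n})"
    by (rule arg_cong[where f = card]) auto
  also have "\<dots> = card {(b, c). b + c \<le> n} + card {(b, c). b + c = Suc n}"
    by (rule card_Un_disjoint)
       (auto simp: diag intro: finite_subset[of _ "{0..n} \<times> {0..n}"])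
  also have "card {(b, c). b + c = Suc n} = n + 2"
    unfolding diag by (subst card_image) (auto simp: inj_on_def)
  finally show ?case using Suc by (simp add: algebra_simps)
qed

lemma card_free_coeffs_1: "card {a \<in> mindices p. fst a = 0 \<and> fst (snd a) \<le> 1} = 2 * p + 1"
proof -
  have "{a \<in> mindices p. fst a = 0 \<and> fst (snd a) \<le> 1}
      = (\<lambda>c. (0, 0, c)) ` {0..p} \<union> (\<lambda>c. (0, 1, c)) ` {0..<p}"
    by (auto simp: mindices_def mdeg_def image_iff le_Suc_eq)
  moreover have "card ((\<lambda>c. (0::nat, 0::nat, c)) ` {0..p} \<union> (\<lambda>c. (0, 1, c)) ` {0..<p}) = (p + 1) + p"
    by (subst card_Un_disjoint) (auto simp: card_image inj_on_def)
  ultimately show ?thesis by simp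
qed

lemma card_free_coeffs_23: "card {a \<in> mindices p. fst a \<le> 1} = (p + 1) * (p + 1)"
proof (cases p)
  case 0
  then have "{a \<in> mindices p. fst a \<le> 1} = {(0, 0, 0)}"
    by (auto simp: mindices_def mdeg_def)
  then show ?thesis using 0 by simp
next
  case (Suc q)
  have fin: "finite {(b, c). b + c \<le> n}" for n :: nat
    by (rule finite_subset[of _ "{0..n} \<times> {0..n}"]) auto
  have "{a \<in> mindices p. fst a \<le> 1}
      = (\<lambda>(b, c). (0, b, c)) ` {(b, c). b + c \<le> p} \<union> (\<lambda>(b, c). (1, b, c)) ` {(b, c). b + c \<le> q}"
    using Suc by (auto simp: mindices_def mdeg_def image_iff le_Suc_eq)
  moreover have "card ((\<lambda>(b, c). (0::nat, b, c)) ` {(b, c). b + c \<le> p}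
      \<union> (\<lambda>(b, c). (1, b, c)) ` {(b, c). b + c \<le> q})
    = card {(b, c). b + c \<le> p} + card {(b :: nat, c :: nat). b + c \<le> q}"
    by (subst card_Un_disjoint) (auto simp: fin card_image inj_on_def)
  moreover have "2 * (card {(b, c). b + c \<le> p} + card {(b :: nat, c :: nat). b + c \<le> q})
      = 2 * ((p + 1) * (p + 1))"
    using card_triangle[of p] card_triangle[of q] Suc by (simp add: algebra_simps)
  ultimately show ?thesis by simp
qed

lemma card_free_coeffs: "card (free_coeffs p) = 2 * p\<^sup>2 + 6 * p + 3"
proof -
  define F1 where "F1 = {a \<in> mindices p. fst a = 0 \<and> fst (snd a) \<le> 1}"
  define F23 where "F23 = {a \<in> mindices p. fst a \<le> 1}"
  have split: "free_coeffs p = {1} \<times> F1 \<union> {2, 3} \<times> F23"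
    by (auto simp: free_coeffs_def F1_def F23_def) (metis exhaust_3)+
  have "finite F1" "finite F23"
    using finite_mindices by (auto simp: F1_def F23_def)
  then have "card (free_coeffs p) = card ({1 :: 3} \<times> F1) + card ({2, 3 :: 3} \<times> F23)"
    unfolding split by (intro card_Un_disjoint) auto
  also have "\<dots> = 2 * p\<^sup>2 + 6 * p + 3"
    unfolding F1_def F23_def card_cartesian_product card_free_coeffs_1 card_free_coeffs_23
    by (simp add: power2_eq_square algebra_simps)
  finally show ?thesis .
qed


section \<open>The dimension count\<close>

interpretation FS: vector_space fscale
  by unfold_locales (auto simp: fscale_def fun_eq_iff algebra_simps)

context vector_space
begin

lemma dim_le_Suc_dim_kernel:
  assumes T: "subspace T" and TB: "T \<subseteq> span B" and B: "finite B"
    and add: "\<And>x y. x \<in> T \<Longrightarrow> y \<in> T \<Longrightarrow> \<phi> (x + y) = \<phi> x + \<phi> y"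
    and scale: "\<And>r x. x \<in> T \<Longrightarrow> \<phi> (scale r x) = r * \<phi> x"
  shows "dim T \<le> Suc (dim {x\<in>T. \<phi> x = 0})"
proof (cases "\<forall>x\<in>T. \<phi> x = 0")
  case True
  then have "{x\<in>T. \<phi> x = 0} = T" by auto
  then show ?thesis by simp
next
  case False
  then obtain b0 where b0: "b0 \<in> T" "\<phi> b0 \<noteq> 0" by auto
  define T0 where "T0 = {x\<in>T. \<phi> x = 0}"
  obtain K where K: "K \<subseteq> T0" "independent K" "T0 \<subseteq> span K" "card K = dim T0"
    using basis_exists by blast
  have "finite K"
    using independent_span_bound[OF B K(2)] K(1) TB unfolding T0_def by auto
  have "x \<in> span (insert b0 K)" if x: "x \<in> T" for x
  proof -
    define r where "r = \<phi> x / \<phi> b0"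
    have rb0: "scale r b0 \<in> T" using T b0 by (simp add: subspace_def)
    then have "x - scale r b0 \<in> T" using T x subspace_diff by blast
    moreover have "\<phi> (x - scale r b0) = 0"
      using add[OF \<open>x - scale r b0 \<in> T\<close> rb0] scale[OF b0(1)] b0(2) by (simp add: r_def)
    ultimately have "x - scale r b0 \<in> span (insert b0 K)"
      using K(3) span_mono[of K "insert b0 K"] by (auto simp: T0_def)
    then have "(x - scale r b0) + scale r b0 \<in> span (insert b0 K)"
      by (intro span_add[OF _ span_scale[OF span_base]]) auto
    then show ?thesis by simp
  qed
  then have "dim T \<le> card (insert b0 K)"
    using dim_le_card \<open>finite K\<close> by blast
  also have "\<dots> \<le> Suc (card K)"
    by (simp add: card_insert_le_m1 \<open>finite K\<close> card_insert_if)
  finally show ?thesis using K(4) T0_def by simp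
qed

lemma subspace_common_kernel:
  assumes T: "subspace T"
    and add: "\<And>j x y. j \<in> J \<Longrightarrow> x \<in> T \<Longrightarrow> y \<in> T \<Longrightarrow> \<phi> j (x + y) = \<phi> j x + \<phi> j y"
    and scale: "\<And>j r x. j \<in> J \<Longrightarrow> x \<in> T \<Longrightarrow> \<phi> j (scale r x) = r * \<phi> j x"
  shows "subspace {x\<in>T. \<forall>j\<in>J. \<phi> j x = 0}"
proof -
  have "\<phi> j 0 = 0" if "j \<in> J" for j
    using scale[OF that subspace_0[OF T], of 0] by simp
  then show ?thesis
    using T add scale unfolding subspace_def by auto
qed

lemma dim_le_dim_common_kernel_add_card:
  assumes T: "subspace T" and TB: "T \<subseteq> span B" and B: "finite B" and J: "finite J"
    and add: "\<And>j x y. j \<in> J \<Longrightarrow> x \<in> T \<Longrightarrow> y \<in> T \<Longrightarrow> \<phi> j (x + y) = \<phi> j x + \<phi> j y"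
    and scale: "\<And>j r x. j \<in> J \<Longrightarrow> x \<in> T \<Longrightarrow> \<phi> j (scale r x) = r * \<phi> j x"
  shows "dim T \<le> dim {x\<in>T. \<forall>j\<in>J. \<phi> j x = 0} + card J"
  using J add scale
proof (induction J rule: finite_induct)
  case (insert j0 J)
  define S where "S = {x\<in>T. \<forall>j\<in>J. \<phi> j x = 0}"
  have "dim T \<le> dim S + card J"
    unfolding S_def using insert by auto
  moreover have "subspace S"
    unfolding S_def using insert.prems by (intro subspace_common_kernel[OF T]) auto
  then have "dim S \<le> Suc (dim {x\<in>S. \<phi> j0 x = 0})"
    using TB by (intro dim_le_Suc_dim_kernel[OF _ _ B]) (auto simp: S_def intro: insert.prems)
  moreover have "{x\<in>S. \<phi> j0 x = 0} = {x\<in>T. \<forall>j\<in>insert j0 J. \<phi> j x = 0}"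
    by (auto simp: S_def)
  ultimately show ?case using insert.hyps by simp
qed simp

end

lemma sum_fun_apply: "(\<Sum>j\<in>S. F j) x = (\<Sum>j\<in>S. F j x)"
  by (induction S rule: infinite_finite_induct) auto

definition basis_field :: "real^3 \<Rightarrow> 3 \<times> mindex \<Rightarrow> real^3 \<Rightarrow> real^3" where
  "basis_field x0 j = (\<lambda>x. mono (snd j) (x - x0) *\<^sub>R axis (fst j) 1)"

lemma poly_field_eq_sum_basis_field:
  "poly_field p x0 c = (\<Sum>j\<in>UNIV \<times> mindices p. fscale (c (snd j) $ fst j) (basis_field x0 j))"
proof
  fix x
  have "(\<Sum>j\<in>UNIV \<times> mindices p. fscale (c (snd j) $ fst j) (basis_field x0 j)) x
      = (\<Sum>i\<in>UNIV. \<Sum>a\<in>mindices p. (c a $ i) *\<^sub>R (mono a (x - x0) *\<^sub>R axis i 1))"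
    by (simp add: fscale_def basis_field_def sum.cartesian_product split_def sum_fun_apply)
  also have "\<dots> = (\<Sum>a\<in>mindices p. mono a (x - x0) *\<^sub>R (\<Sum>i\<in>UNIV. (c a $ i) *\<^sub>R axis i 1))"
    by (subst sum.swap) (simp add: scaleR_sum_right mult.commute)
  also have "\<dots> = poly_field p x0 c x"
    by (simp add: poly_field_def vec_eq_iff sum_component axis_def if_distrib cong: if_cong)
  finally show "poly_field p x0 c x
      = (\<Sum>j\<in>UNIV \<times> mindices p. fscale (c (snd j) $ fst j) (basis_field x0 j)) x"
    by simp
qed

lemma basis_field_eq_poly_field:
  "a \<in> mindices p \<Longrightarrow> basis_field x0 (i, a) = poly_field p x0 (\<lambda>b. if b = a then axis i 1 else 0)"
  by (simp add: basis_field_def poly_field_def fun_eq_iff if_distrib finite_mindices cong: if_cong)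

lemma poly_field_add: "poly_field p x0 c + poly_field p x0 d = poly_field p x0 (\<lambda>a. c a + d a)"
  by (simp add: poly_field_def fun_eq_iff scaleR_add_right sum.distrib)

lemma poly_field_scale: "fscale r (poly_field p x0 c) = poly_field p x0 (\<lambda>a. r *\<^sub>R c a)"
  by (simp add: poly_field_def fscale_def fun_eq_iff scaleR_sum_right mult.commute)

lemma polyfield_iff: "polyfield p x0 F \<longleftrightarrow> F \<in> range (poly_field p x0)"
  by (auto simp: polyfield_def poly_field_def fun_eq_iff)

lemma subspace_poly_fields: "FS.subspace (range (poly_field p x0))"
proof -
  have "0 = poly_field p x0 (\<lambda>a. 0)"
    by (simp add: poly_field_def fun_eq_iff)
  then show ?thesis
    unfolding FS.subspace_def by (auto simp: poly_field_add poly_field_scale)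
qed

lemma field_coeff_poly_field_add:
  "field_coeff x0 (poly_field p x0 c + poly_field p x0 d)
     = (\<lambda>i a. field_coeff x0 (poly_field p x0 c) i a + field_coeff x0 (poly_field p x0 d) i a)"
  by (auto simp: poly_field_add field_coeff_poly_field fun_eq_iff)

lemma field_coeff_poly_field_scale:
  "field_coeff x0 (fscale r (poly_field p x0 c)) = (\<lambda>i a. r * field_coeff x0 (poly_field p x0 c) i a)"
  by (auto simp: poly_field_scale field_coeff_poly_field fun_eq_iff)

lemma poly_field_eq_0I:
  assumes "\<And>i a. a \<in> mindices p \<Longrightarrow> field_coeff x0 (poly_field p x0 c) i a = 0"
  shows "poly_field p x0 c = 0"
proof -
  have "c a = 0" if "a \<in> mindices p" for a
    using assms that by (auto simp: field_coeff_poly_field vec_eq_iff)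
  then show ?thesis by (simp add: poly_field_def fun_eq_iff)
qed

lemma poly_fields_subset_span:
  "range (poly_field p x0) \<subseteq> FS.span (basis_field x0 ` (UNIV \<times> mindices p))"
proof
  fix F assume "F \<in> range (poly_field p x0)"
  then obtain c where "F = poly_field p x0 c" by blast
  then show "F \<in> FS.span (basis_field x0 ` (UNIV \<times> mindices p))"
    unfolding poly_field_eq_sum_basis_field
    by (auto intro!: FS.span_sum FS.span_scale intro: FS.span_base)
qed

lemma field_coeff_basis_field:
  assumes "a \<in> mindices p" "a' \<in> mindices p"
  shows "field_coeff x0 (basis_field x0 (i', a')) i a = (if a = a' \<and> i = i' then 1 else 0)"
  using assms by (simp add: basis_field_eq_poly_field field_coeff_poly_field axis_def)

lemma inj_on_basis_field: "inj_on (basis_field x0) (UNIV \<times> mindices p)"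
proof (rule inj_onI)
  fix j j' assume j: "j \<in> UNIV \<times> mindices p" "j' \<in> UNIV \<times> mindices p"
    and eq: "basis_field x0 j = basis_field x0 j'"
  obtain i a i' a' where jj: "j = (i, a)" "j' = (i', a')" by (cases j; cases j')
  have "field_coeff x0 (basis_field x0 (i, a)) i a = field_coeff x0 (basis_field x0 (i', a')) i a"
    using eq jj by simp
  then show "j = j'"
    using field_coeff_basis_field j jj by (auto split: if_splits)
qed

lemma independent_basis_fields: "FS.independent (basis_field x0 ` (UNIV \<times> mindices p))"
proof (rule FS.independent_if_scalars_zero)
  fix f v
  assume sum0: "(\<Sum>x\<in>basis_field x0 ` (UNIV \<times> mindices p). fscale (f x) x) = 0"
    and "v \<in> basis_field x0 ` (UNIV \<times> mindices p)"
  then obtain i a where v: "v = basis_field x0 (i, a)" "a \<in> mindices p"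
    by auto
  define c where "c a = (\<chi> i. f (basis_field x0 (i, a)))" for a
  have "poly_field p x0 c = (\<Sum>j\<in>UNIV \<times> mindices p. fscale (f (basis_field x0 j)) (basis_field x0 j))"
    unfolding poly_field_eq_sum_basis_field c_def by (intro sum.cong refl) auto
  also have "\<dots> = 0"
    using sum0 sum.reindex[OF inj_on_basis_field, of "\<lambda>x. fscale (f x) x"] by simp
  finally have "field_coeff x0 (poly_field p x0 c) i a = field_coeff x0 0 i a"
    by simp
  also have "\<dots> = 0"
    by (simp add: field_coeff_def zero_fun_def taylor_coeff_const)
  finally show "f v = 0"
    using v by (simp add: field_coeff_poly_field c_def)
qed (simp add: finite_mindices)

lemma dim_poly_fields: "FS.dim (range (poly_field p x0)) = card ((UNIV :: 3 set) \<times> mindices p)"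
proof -
  have "basis_field x0 ` (UNIV \<times> mindices p) \<subseteq> range (poly_field p x0)"
    using basis_field_eq_poly_field by auto
  then have "FS.span (range (poly_field p x0)) = FS.span (basis_field x0 ` (UNIV \<times> mindices p))"
    using FS.span_minimal[OF poly_fields_subset_span FS.subspace_span] FS.span_mono by blast
  then have "FS.dim (range (poly_field p x0)) = card (basis_field x0 ` (UNIV \<times> mindices p))"
    using FS.span_eq_dim FS.dim_eq_card_independent[OF independent_basis_fields] by metis
  also have "\<dots> = card ((UNIV :: 3 set) \<times> mindices p)"
    by (rule card_image[OF inj_on_basis_field])
  finally show ?thesis .
qed

context
  fixes U :: "(real^3) set" and x0 :: "real^3" and p :: nat and eps :: "real^3 \<Rightarrow> real"
  assumes U: "open U" and x0: "x0 \<in> U" and eps: "Ck_on p U eps" and p: "p \<ge> 2"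
begin

lemma QT_eq_common_kernel:
  "QT p x0 eps = {F \<in> range (poly_field p x0). \<forall>j\<in>pivot_coeffs p.
     pivot_residual p (\<lambda>d. taylor_coeff x0 d eps) (field_coeff x0 F) j = 0}"
proof (intro set_eqI iffI)
  fix F assume F: "F \<in> QT p x0 eps"
  then obtain c where "F = poly_field p x0 c"
    by (auto simp: QT_def polyfield_iff)
  with F show "F \<in> {F \<in> range (poly_field p x0). \<forall>j\<in>pivot_coeffs p.
      pivot_residual p (\<lambda>d. taylor_coeff x0 d eps) (field_coeff x0 F) j = 0}"
    using poly_field_in_QT_iff[OF U x0 eps p, of c] pivot_residuals_eq_0 by auto
next
  fix F assume F: "F \<in> {F \<in> range (poly_field p x0). \<forall>j\<in>pivot_coeffs p.
      pivot_residual p (\<lambda>d. taylor_coeff x0 d eps) (field_coeff x0 F) j = 0}"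
  then obtain c where "F = poly_field p x0 c"
    by auto
  with F show "F \<in> QT p x0 eps"
    using poly_field_in_QT_iff[OF U x0 eps p, of c] residuals_eq_0_if_pivot_residuals_eq_0[OF p]
    by auto
qed

lemma subspace_QT: "FS.subspace (QT p x0 eps)"
  unfolding QT_eq_common_kernel
  by (intro FS.subspace_common_kernel[OF subspace_poly_fields])
     (auto simp: field_coeff_poly_field_add field_coeff_poly_field_scale
       pivot_residual_add pivot_residual_scale)

lemma QT_subset_span: "QT p x0 eps \<subseteq> FS.span (basis_field x0 ` (UNIV \<times> mindices p))"
  using poly_fields_subset_span QT_eq_common_kernel by blast

lemma card_free_coeffs_le_dim_QT: "card (free_coeffs p) \<le> FS.dim (QT p x0 eps)"
proof -
  have fin: "finite ((UNIV :: 3 set) \<times> mindices p)"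
    by (simp add: finite_mindices)
  have "FS.dim (range (poly_field p x0)) \<le> FS.dim (QT p x0 eps) + card (pivot_coeffs p)"
    unfolding QT_eq_common_kernel
    by (intro FS.dim_le_dim_common_kernel_add_card[OF subspace_poly_fields poly_fields_subset_span])
       (auto simp: fin pivot_coeffs_def field_coeff_poly_field_add field_coeff_poly_field_scale
         pivot_residual_add pivot_residual_scale)
  moreover have "free_coeffs p \<subseteq> UNIV \<times> mindices p"
    by (auto simp: free_coeffs_def)
  then have "card (pivot_coeffs p) = card ((UNIV :: 3 set) \<times> mindices p) - card (free_coeffs p)"
    and "card (free_coeffs p) \<le> card ((UNIV :: 3 set) \<times> mindices p)"
    unfolding pivot_coeffs_def using fin by (auto intro: card_Diff_subset card_mono finite_subset)
  ultimately show ?thesis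
    using dim_poly_fields by simp
qed

lemma QT_eq_0_if_free_coeffs_eq_0:
  assumes "eps x0 \<noteq> 0" and F: "F \<in> QT p x0 eps"
    and free: "\<And>i a. (i, a) \<in> free_coeffs p \<Longrightarrow> field_coeff x0 F i a = 0"
  shows "F = 0"
proof -
  obtain c where c: "F = poly_field p x0 c"
    using F by (auto simp: QT_def polyfield_iff)
  have res: "(\<forall>i. \<forall>b\<in>mindices (p - 2).
      curlcurl_residual p (\<lambda>d. taylor_coeff x0 d eps) (field_coeff x0 F) i b = 0) \<and>
    (\<forall>b\<in>mindices (p - 1). div_residual p (\<lambda>d. taylor_coeff x0 d eps) (field_coeff x0 F) b = 0)"
    using F poly_field_in_QT_iff[OF U x0 eps p] by (simp add: c)
  have "field_coeff x0 F i a = 0" for i a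
  proof (rule coeffs_vanish[where e = "\<lambda>d. taylor_coeff x0 d eps"])
    show "field_coeff x0 F i a = 0" if "a \<notin> mindices p" for i a
      using that by (simp add: c field_coeff_poly_field)
    show "taylor_coeff x0 (0, 0, 0) eps \<noteq> 0"
      using assms(1) by (simp add: taylor_coeff_0)
    show "curlcurl_residual p (\<lambda>d. taylor_coeff x0 d eps) (field_coeff x0 F) i b = 0"
      if "mdeg b + 2 \<le> p" for i b
      using res that by (simp add: mindices_def del: split_paired_All)
    show "div_residual p (\<lambda>d. taylor_coeff x0 d eps) (field_coeff x0 F) b = 0"
      if "mdeg b + 1 \<le> p" for b
      using res that by (simp add: mindices_def del: split_paired_All)
  qed (use free in auto)
  then show ?thesis
    unfolding c by (intro poly_field_eq_0I) (simp add: c)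
qed

lemma dim_QT_le_card_free_coeffs:
  assumes "eps x0 \<noteq> 0"
  shows "FS.dim (QT p x0 eps) \<le> card (free_coeffs p)"
proof -
  let ?K = "{F \<in> QT p x0 eps. \<forall>j\<in>free_coeffs p. field_coeff x0 F (fst j) (snd j) = 0}"
  have "finite (free_coeffs p)"
    by (rule finite_subset[of _ "UNIV \<times> mindices p"]) (auto simp: free_coeffs_def finite_mindices)
  then have "FS.dim (QT p x0 eps) \<le> FS.dim ?K + card (free_coeffs p)"
    using QT_eq_common_kernel
    by (intro FS.dim_le_dim_common_kernel_add_card[OF subspace_QT QT_subset_span])
       (auto simp: field_coeff_poly_field_add field_coeff_poly_field_scale finite_mindices)
  moreover have "?K \<subseteq> FS.span {}"
  proof
    fix F assume "F \<in> ?K"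
    then show "F \<in> FS.span {}"
      using QT_eq_0_if_free_coeffs_eq_0[OF assms, of F] by (fastforce simp: FS.span_empty)
  qed
  then have "FS.dim ?K = 0"
    using FS.dim_le_card[of ?K "{}"] by simp
  ultimately show ?thesis by simp
qed

end

theorem mainTheorem14:
  fixes p :: nat and x0 :: "real^3" and eps :: "real^3 \<Rightarrow> real"
  assumes "p \<ge> 3"
    and "\<exists>U. open U \<and> x0 \<in> U \<and> Ck_on p U eps"
    and "eps x0 \<noteq> 0"
  shows "vector_space.dim fscale (QT p x0 eps) = 2 * p^2 + 6 * p + 3"
proof -
  obtain U where U: "open U" "x0 \<in> U" "Ck_on p U eps"
    using assms(2) by blast
  have "p \<ge> 2"
    using assms(1) by simp
  then have "FS.dim (QT p x0 eps) = card (free_coeffs p)"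
    using card_free_coeffs_le_dim_QT[OF U] dim_QT_le_card_free_coeffs[OF U _ assms(3)]
    by (simp add: antisym)
  then show ?thesis
    by (simp add: card_free_coeffs)
qed

end
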